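(* For every $\lambda\in(0,1)$, the ladder surface $X_\lambda$ admits an orientation-preserving affine homeomorphism with derivative $$R=\begin{pmatrix}-1&-1\\1&0\end{pmatrix},$$ which is an elliptic element of order $3$ in $\mathrm{PSL}(2,\mathbb{R})$. Equivalently, after applying the linear map $\begin{pmatrix}1&1/2\\0&\sqrt3/2\end{pmatrix}$ to $X_\lambda$, the resulting surface has the rotation by $2\pi/3$ in its Veech group.
   Context: Notation: for $\lambda>0$ put $s_{-1}=0$ and $s_n=\sum_{i=0}^{n}\lambda^i$ for $n\ge 0$. Let $L_\lambda$ be the infinite polygonal path with consecutive vertices $(0,0),(s_0,0)$ and then, for $n\ge1$, the two vertices $(s_n,s_{n-2})$ and $(s_n,s_{n-1})$. Let $U_\lambda$ be its reflection in the line $y=x$. The \emph{ladder surface} $X_\lambda$ is the translation surface obtained from the open region bounded by $L_\lambda$ and $U_\lambda$ by identifying, via translation, each edge of $L_\lambda$ with the edge of $U_\lambda$ that is parallel to it and of the same length. Vertices are not points of $X_\lambda$. An affine homeomorphism is one that is locally of the form $z\mapsto Az+t$ in translation charts; the matrix $A$ is its derivative. The Veech group is the image in $\mathrm{PSL}(2,\mathbb{R})$ of the derivatives of orientation-preserving affine homeomorphisms. *)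

theory Defs
  imports "HOL-Analysis.Analysis"
begin

text \<open>s_n = sum_{i=0}^n lam^i for n >= 0, and s_n = 0 for n < 0 (only s_{-1} = 0 is used).\<close>
definition ladder_s :: "real \<Rightarrow> int \<Rightarrow> real" where
  "ladder_s lam n = (if n < 0 then 0 else (\<Sum>i\<le>nat n. lam ^ i))"

text \<open>Consecutive vertices of L: (0,0), (s_0,0), then for n >= 1 the vertices
  (s_n, s_{n-2}) (index 2n) and (s_n, s_{n-1}) (index 2n+1).\<close>
definition Lvert :: "real \<Rightarrow> nat \<Rightarrow> real^2" where
  "Lvert lam k =
     (if k = 0 then vector [0, 0]
      else if k = 1 then vector [ladder_s lam 0, 0]
      else if even k then vector [ladder_s lam (int (k div 2)), ladder_s lam (int (k div 2) - 2)]
      else vector [ladder_s lam (int (k div 2)), ladder_s lam (int (k div 2) - 1)])"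

definition Uvert :: "real \<Rightarrow> nat \<Rightarrow> real^2" where
  "Uvert lam k = vector [Lvert lam k $ 2, Lvert lam k $ 1]"

definition Lpath :: "real \<Rightarrow> (real^2) set" where
  "Lpath lam = (\<Union>k. closed_segment (Lvert lam k) (Lvert lam (Suc k)))"

definition Upath :: "real \<Rightarrow> (real^2) set" where
  "Upath lam = (\<Union>k. closed_segment (Uvert lam k) (Uvert lam (Suc k)))"

text \<open>The open region bounded by L and U (the bounded complementary region of the
  closed curve formed by L, U and their common limit point).\<close>
definition ladder_region :: "real \<Rightarrow> (real^2) set" where
  "ladder_region lam = inside (closure (Lpath lam \<union> Upath lam))"

definition ladder_Y :: "real \<Rightarrow> (real^2) set" where
  "ladder_Y lam = ladder_region lam
     \<union> (\<Union>k. open_segment (Lvert lam k) (Lvert lam (Suc k)))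
     \<union> (\<Union>k. open_segment (Uvert lam k) (Uvert lam (Suc k)))"

definition ladder_glue :: "real \<Rightarrow> real^2 \<Rightarrow> real^2 \<Rightarrow> bool" where
  "ladder_glue lam p q \<longleftrightarrow>
     (\<exists>k j tau. p \<in> open_segment (Lvert lam k) (Lvert lam (Suc k))
        \<and> (\<lambda>x. x + tau) ` closed_segment (Lvert lam k) (Lvert lam (Suc k))
            = closed_segment (Uvert lam j) (Uvert lam (Suc j))
        \<and> q = p + tau)"

definition ladder_rel :: "real \<Rightarrow> ((real^2) \<times> (real^2)) set" where
  "ladder_rel lam = {(p, q). p \<in> ladder_Y lam \<and> q \<in> ladder_Y lam
        \<and> (p = q \<or> ladder_glue lam p q \<or> ladder_glue lam q p)}"

definition ladder_X :: "real \<Rightarrow> (real^2) set set" where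
  "ladder_X lam = ladder_Y lam // ladder_rel lam"

definition ladder_proj :: "real \<Rightarrow> real^2 \<Rightarrow> (real^2) set" where
  "ladder_proj lam y = ladder_rel lam `` {y}"

definition ladder_open :: "real \<Rightarrow> (real^2) set set \<Rightarrow> bool" where
  "ladder_open lam W \<longleftrightarrow> W \<subseteq> ladder_X lam
     \<and> openin (top_of_set (ladder_Y lam)) {y \<in> ladder_Y lam. ladder_proj lam y \<in> W}"

lemma istopology_ladder_open: "istopology (ladder_open lam)"
  unfolding istopology_def
proof (intro conjI allI impI)
  fix S T assume "ladder_open lam S" "ladder_open lam T"
  moreover have "{y \<in> ladder_Y lam. ladder_proj lam y \<in> S \<inter> T}
      = {y \<in> ladder_Y lam. ladder_proj lam y \<in> S} \<inter> {y \<in> ladder_Y lam. ladder_proj lam y \<in> T}" by auto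
  ultimately show "ladder_open lam (S \<inter> T)"
    unfolding ladder_open_def by (auto intro: openin_Int)
next
  fix K assume K: "\<forall>S\<in>K. ladder_open lam S"
  have "{y \<in> ladder_Y lam. ladder_proj lam y \<in> \<Union>K}
      = (\<Union>S\<in>K. {y \<in> ladder_Y lam. ladder_proj lam y \<in> S})" by auto
  moreover have "openin (top_of_set (ladder_Y lam)) (\<Union>S\<in>K. {y \<in> ladder_Y lam. ladder_proj lam y \<in> S})"
    using K unfolding ladder_open_def by (intro openin_Union) auto
  ultimately show "ladder_open lam (\<Union>K)"
    using K unfolding ladder_open_def by auto
qed

definition ladder_top :: "real \<Rightarrow> (real^2) set topology" where
  "ladder_top lam = topology (ladder_open lam)"

text \<open>Translation charts: open embeddings into the plane which, on the open region
  (where the identity is a chart), differ locally from the identity by a translation.\<close>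
definition translation_chart :: "real \<Rightarrow> (real^2) set set \<Rightarrow> ((real^2) set \<Rightarrow> real^2) \<Rightarrow> bool" where
  "translation_chart lam W \<phi> \<longleftrightarrow>
     openin (ladder_top lam) W \<and> open (\<phi> ` W)
     \<and> homeomorphic_map (subtopology (ladder_top lam) W) (top_of_set (\<phi> ` W)) \<phi>
     \<and> (\<forall>x \<in> ladder_region lam. ladder_proj lam x \<in> W \<longrightarrow>
          (\<exists>d>0. \<forall>y \<in> ball x d. y \<in> ladder_region lam \<and> ladder_proj lam y \<in> W
              \<and> \<phi> (ladder_proj lam y) - y = \<phi> (ladder_proj lam x) - x))"

definition ladder_affine_homeo :: "real \<Rightarrow> real^2^2 \<Rightarrow> ((real^2) set \<Rightarrow> (real^2) set) \<Rightarrow> bool" where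
  "ladder_affine_homeo lam A f \<longleftrightarrow>
     homeomorphic_map (ladder_top lam) (ladder_top lam) f
     \<and> (\<forall>P \<in> ladder_X lam. \<exists>W \<phi> W' \<psi> N t.
          translation_chart lam W \<phi> \<and> translation_chart lam W' \<psi>
          \<and> openin (ladder_top lam) N \<and> P \<in> N \<and> N \<subseteq> W \<and> f ` N \<subseteq> W'
          \<and> (\<forall>Q \<in> N. \<psi> (f Q) = A *v \<phi> Q + t))"

definition orientation_preserving_affine :: "real \<Rightarrow> real^2^2 \<Rightarrow> ((real^2) set \<Rightarrow> (real^2) set) \<Rightarrow> bool" where
  "orientation_preserving_affine lam A f \<longleftrightarrow> ladder_affine_homeo lam A f \<and> det A > 0"

text \<open>The matrix R = ((-1,-1),(1,0)) (given by its rows).\<close>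
definition Rmat :: "real^2^2" where
  "Rmat = vector [vector [-1, -1], vector [1, 0]]"

end

theory Submission
  imports Defs
begin

text \<open>Write t_k = s_(k-2), so that t_0 = t_1 = 0, t_2 = 1 and t_(k+1) - t_k = \<lambda>^(k-1) for k \<ge> 1.
  The region bounded by L and U is the union of the open squares (t_j, t_(j+2))^2, and the
  lines x + y = t_j + t_(j+1) cut it into hexagons H_j. Each H_j has its bottom and right side
  on L, its top and left side on U, and two cuts shared with H_(j-1) and H_(j+1); the gluing
  identifies the bottom of H_j with the top of H_(j+1) and the right side of H_j with the left
  side of H_(j-1).

  The affine map \<rho>_j(x, y) = (t_j + t_(j+1) + t_(j+2) - x - y, x), whose linear part is R,
  maps H_j onto itself and permutes its six sides cyclically in steps of two. The side
  pairings are translations compatible with these maps, so the \<rho>_j descend to a well defined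
  map of X_\<lambda> whose cube is the identity. Near every point a translation chart comes from a
  small disc cut by the line through a side, its far half translated to the glued side; in
  these charts the map is z \<mapsto> R z + c.\<close>

definition vec2 :: "real \<Rightarrow> real \<Rightarrow> real^2" where "vec2 a b = vector [a, b]"

lemma vec2_nth [simp]: "vec2 a b $ 1 = a" "vec2 a b $ 2 = b"
  by (simp_all add: vec2_def)

lemma vec2_eq_iff [simp]: "vec2 a b = vec2 c d \<longleftrightarrow> a = c \<and> b = d"
  by (auto simp: vec2_def vec_eq_iff forall_2)

lemma eq_vec2_iff: "z = vec2 a b \<longleftrightarrow> z$1 = a \<and> z$2 = b"
  by (auto simp: vec2_def vec_eq_iff forall_2)

lemma vec2_components: "z = vec2 (z$1) (z$2)"
  by (simp add: vec_eq_iff forall_2)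

lemma vec2_add [simp]: "vec2 a b + vec2 c d = vec2 (a+c) (b+d)"
  by (simp add: vec_eq_iff forall_2)

lemma vec2_diff [simp]: "vec2 a b - vec2 c d = vec2 (a-c) (b-d)"
  by (simp add: vec_eq_iff forall_2)

lemma vec2_scaleR [simp]: "u *\<^sub>R vec2 a b = vec2 (u*a) (u*b)"
  by (simp add: vec_eq_iff forall_2)

lemma zero_vec2: "0 = vec2 0 0"
  by (simp add: vec_eq_iff forall_2)

lemma norm_vec2: "norm (vec2 a b) = sqrt (a^2 + b^2)"
  by (simp add: norm_vec_def L2_set_def UNIV_2 power2_eq_square)

lemma dist_vec2: "dist (vec2 a b) (vec2 c d) = sqrt ((a-c)^2 + (b-d)^2)"
  by (simp add: dist_norm norm_vec2)

lemma component1_le_dist: "\<bar>z$1 - w$1\<bar> \<le> dist z w"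
  by (metis dist_norm vector_minus_component component_le_norm_cart)

lemma component2_le_dist: "\<bar>z$2 - w$2\<bar> \<le> dist z w"
  by (metis dist_norm vector_minus_component component_le_norm_cart)

lemma mem_box_vec2: "z \<in> box (vec2 a b) (vec2 c d) \<longleftrightarrow> a < z$1 \<and> z$1 < c \<and> b < z$2 \<and> z$2 < d"
  by (simp add: mem_box_cart forall_2)

lemma mem_cbox_vec2: "z \<in> cbox (vec2 a b) (vec2 c d) \<longleftrightarrow> a \<le> z$1 \<and> z$1 \<le> c \<and> b \<le> z$2 \<and> z$2 \<le> d"
  by (simp add: mem_box_cart forall_2)

definition swap_xy :: "real^2 \<Rightarrow> real^2" where "swap_xy z = vec2 (z$2) (z$1)"

lemma swap_xy_vec2 [simp]: "swap_xy (vec2 a b) = vec2 b a"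
  by (simp add: swap_xy_def)

lemma swap_xy_nth [simp]: "swap_xy z $ 1 = z $ 2" "swap_xy z $ 2 = z $ 1"
  by (simp_all add: swap_xy_def)

lemma swap_xy_swap_xy [simp]: "swap_xy (swap_xy z) = z"
  by (metis swap_xy_def vec2_nth vec2_components)

lemma linear_swap_xy: "linear swap_xy"
  by (rule linearI) (simp_all add: swap_xy_def vec_eq_iff forall_2)

lemma inj_swap_xy: "inj swap_xy"
  by (metis injI swap_xy_swap_xy)

lemma mem_swap_xy_image: "z \<in> swap_xy ` A \<longleftrightarrow> swap_xy z \<in> A"
  by (metis image_iff swap_xy_swap_xy)

lemma dist_swap_xy [simp]: "dist (swap_xy a) (swap_xy b) = dist a b"
  by (metis dist_vec2 vec2_components swap_xy_def add.commute)

lemma mem_ball_swap_xy: "y \<in> ball p r \<longleftrightarrow> swap_xy y \<in> ball (swap_xy p) r"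
  by (simp add: mem_ball)

lemma closed_segment_horizontal:
  assumes "a \<le> b"
  shows "closed_segment (vec2 a c) (vec2 b c) = {z. z$2 = c \<and> a \<le> z$1 \<and> z$1 \<le> b}"
proof (intro set_eqI iffI)
  fix z :: "real^2" assume "z \<in> closed_segment (vec2 a c) (vec2 b c)"
  then obtain u where u: "0 \<le> u" "u \<le> 1" "z = (1 - u) *\<^sub>R vec2 a c + u *\<^sub>R vec2 b c"
    by (auto simp: in_segment)
  have "u*a \<le> u*b" "(1-u)*a \<le> (1-u)*b" using u assms by (simp_all add: mult_left_mono)
  then have "a \<le> (1-u)*a + u*b" "(1-u)*a + u*b \<le> b" by (simp_all add: algebra_simps)
  moreover have "(1-u)*c + u*c = c" by (simp add: algebra_simps)
  ultimately show "z \<in> {z. z$2 = c \<and> a \<le> z$1 \<and> z$1 \<le> b}" using u by simp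
next
  fix z :: "real^2" assume z: "z \<in> {z. z$2 = c \<and> a \<le> z$1 \<and> z$1 \<le> b}"
  show "z \<in> closed_segment (vec2 a c) (vec2 b c)"
  proof (cases "a = b")
    case True
    with z have "z = vec2 a c" by (subst vec2_components) auto
    then show ?thesis by simp
  next
    case False
    define u where "u = (z$1 - a) / (b - a)"
    have u: "0 \<le> u" "u \<le> 1" using z assms False by (auto simp: u_def divide_simps)
    have "u*(b-a) = z$1 - a" using False assms by (simp add: u_def)
    then have "(1-u)*a + u*b = z$1" by (simp add: algebra_simps)
    moreover have "(1-u)*c + u*c = c" by (simp add: algebra_simps)
    ultimately have "z = (1 - u) *\<^sub>R vec2 a c + u *\<^sub>R vec2 b c"
      using z by (subst vec2_components) simp
    then show ?thesis using u by (auto simp: in_segment)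
  qed
qed

lemma open_segment_horizontal:
  assumes "a < b"
  shows "open_segment (vec2 a c) (vec2 b c) = {z. z$2 = c \<and> a < z$1 \<and> z$1 < b}"
  using assms unfolding open_segment_def closed_segment_horizontal[OF less_imp_le[OF assms]]
  by (auto simp: eq_vec2_iff)

lemma closed_segment_vertical:
  assumes "a \<le> b"
  shows "closed_segment (vec2 c a) (vec2 c b) = {z. z$1 = c \<and> a \<le> z$2 \<and> z$2 \<le> b}"
proof -
  have "closed_segment (vec2 c a) (vec2 c b) = swap_xy ` closed_segment (vec2 a c) (vec2 b c)"
    using closed_segment_linear_image[OF linear_swap_xy, of "vec2 a c" "vec2 b c"] by simp
  then show ?thesis using closed_segment_horizontal[OF assms] by (auto simp: mem_swap_xy_image)
qed

lemma open_segment_vertical: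
  assumes "a < b"
  shows "open_segment (vec2 c a) (vec2 c b) = {z. z$1 = c \<and> a < z$2 \<and> z$2 < b}"
proof -
  have "open_segment (vec2 c a) (vec2 c b) = swap_xy ` open_segment (vec2 a c) (vec2 b c)"
    using open_segment_linear_image[OF linear_swap_xy inj_swap_xy, of "vec2 a c" "vec2 b c"] by simp
  then show ?thesis using open_segment_horizontal[OF assms] by (auto simp: mem_swap_xy_image)
qed

lemma translate_closed_segment:
  "(\<lambda>x. x + tau) ` closed_segment a b = closed_segment (a + tau) (b + tau)"
  using closed_segment_translation[of tau a b] by (simp add: add.commute)

lemma translated_doubleton_eq:
  fixes a b c d tau :: "real^2"
  assumes "{a + tau, b + tau} = {c, d}" "a \<noteq> b"
    and "\<forall>i. 0 \<le> (b - a) $ i" and "\<forall>i. 0 \<le> (d - c) $ i"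
  shows "a + tau = c \<and> b + tau = d"
proof (rule ccontr)
  assume "\<not> ?thesis"
  with assms(1) have "a + tau = d" "b + tau = c" by (auto simp: doubleton_eq_iff)
  then have "d - c = a - b" by (metis add_diff_cancel_right diff_diff_eq2 diff_add_cancel)
  then have "\<forall>i. (b - a) $ i = 0" using assms(3,4)
    by (metis minus_diff_eq order_antisym_conv vector_uminus_component neg_0_le_iff_le)
  then have "b - a = 0" by (simp add: vec_eq_iff)
  then show False using assms(2) by simp
qed

lemma translated_segment_eq:
  assumes "{vec2 a1 a2 + tau, vec2 b1 b2 + tau} = {vec2 u1 u2, vec2 v1 v2}" "a1 \<le> b1" "a2 \<le> b2"
    "vec2 a1 a2 \<noteq> vec2 b1 b2" "u1 \<le> v1" "u2 \<le> v2"
  shows "tau = vec2 (u1 - a1) (u2 - a2) \<and> b1 - a1 = v1 - u1 \<and> b2 - a2 = v2 - u2"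
proof -
  have "vec2 a1 a2 + tau = vec2 u1 u2 \<and> vec2 b1 b2 + tau = vec2 v1 v2"
    by (rule translated_doubleton_eq[OF assms(1) assms(4)]) (use assms in \<open>simp_all add: forall_2\<close>)
  moreover obtain ta tb where "tau = vec2 ta tb" using vec2_components by blast
  ultimately show ?thesis by simp
qed

definition ladder_t :: "real \<Rightarrow> nat \<Rightarrow> real" where
  "ladder_t lam k = ladder_s lam (int k - 2)"

lemma add_3_eq_Suc_Suc_Suc [simp]: "n + 3 = Suc (Suc (Suc n))"
  by simp

lemma ladder_t_0 [simp]: "ladder_t lam 0 = 0"
  and ladder_t_1 [simp]: "ladder_t lam (Suc 0) = 0"
  by (simp_all add: ladder_t_def ladder_s_def)

lemma ladder_t_Suc_Suc: "ladder_t lam (Suc (Suc k)) = (\<Sum>i\<le>k. lam ^ i)"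
  by (simp add: ladder_t_def ladder_s_def)

lemma ladder_t_2 [simp]: "ladder_t lam 2 = 1"
  using ladder_t_Suc_Suc[of lam 0] by (simp add: numeral_2_eq_2)

lemma ladder_t_Suc: "1 \<le> k \<Longrightarrow> ladder_t lam (Suc k) = ladder_t lam k + lam ^ (k - 1)"
  by (cases k; cases "k - 1") (auto simp: ladder_t_Suc_Suc)

lemma Lvert_0: "Lvert lam 0 = vec2 0 0"
  by (simp add: Lvert_def vec2_def)

lemma Lvert_odd: "Lvert lam (Suc (2*n)) = vec2 (ladder_t lam (n+2)) (ladder_t lam (n+1))"
  by (cases n) (simp_all add: Lvert_def vec2_def ladder_t_def ladder_s_def algebra_simps)

lemma Lvert_even: "Lvert lam (Suc (Suc (2*n))) = vec2 (ladder_t lam (n+3)) (ladder_t lam (n+1))"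
  by (simp add: Lvert_def vec2_def ladder_t_def algebra_simps)

lemma Uvert_swap_xy: "Uvert lam k = swap_xy (Lvert lam k)"
  by (simp add: Uvert_def swap_xy_def vec2_def)

lemma nat_cases_0_odd_even:
  obtains "k = 0" | n where "k = Suc (2*n)" | n where "k = Suc (Suc (2*n))"
proof -
  have "k = 0 \<or> (\<exists>n. k = Suc (2*n)) \<or> (\<exists>n. k = Suc (Suc (2*n)))" by presburger
  then show ?thesis using that by blast
qed

locale ladder_param =
  fixes lam :: real
  assumes lam_pos: "0 < lam" and lam_less_1: "lam < 1"
begin

abbreviation t where "t \<equiv> ladder_t lam"

definition t_sup where "t_sup = 1 / (1 - lam)"

lemma t_Suc_Suc_0 [simp]: "t (Suc (Suc 0)) = 1"
  using ladder_t_2[of lam] by (simp add: numeral_2_eq_2)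

lemma t_Suc_diff: "1 \<le> k \<Longrightarrow> t (Suc k) - t k = lam ^ (k - 1)"
  using ladder_t_Suc[of k lam] by simp

lemma t_le_Suc: "t k \<le> t (Suc k)"
  using ladder_t_Suc[of k lam] lam_pos by (cases k) auto

lemma t_less_Suc: "1 \<le> k \<Longrightarrow> t k < t (Suc k)"
  using ladder_t_Suc[of k lam] lam_pos by simp

lemma t_mono: "i \<le> k \<Longrightarrow> t i \<le> t k"
  by (induction k rule: dec_induct) (auto intro: order_trans t_le_Suc)

lemma t_strict_mono: "1 \<le> i \<Longrightarrow> i < k \<Longrightarrow> t i < t k"
  using t_less_Suc[of i] t_mono[of "Suc i" k] by simp

lemma t_nonneg: "0 \<le> t k"
  using t_mono[of 0 k] by simp

lemma t_less_imp_less: "t i < t k \<Longrightarrow> i < k"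
  using t_mono[of k i] by (meson not_less)

lemma t_steps:
  "t j \<le> t (Suc j)" "t (Suc j) < t (Suc (Suc j))" "t (Suc (Suc j)) < t (Suc (Suc (Suc j)))"
  "t j < t (Suc (Suc j))"
  using t_le_Suc[of j] t_strict_mono[of "Suc j" "Suc (Suc j)"]
    t_strict_mono[of "Suc (Suc j)" "Suc (Suc (Suc j))"] by auto

lemma t_Suc_diff_inj:
  assumes "1 \<le> a" "1 \<le> b" "t (Suc a) - t a = t (Suc b) - t b"
  shows "a = b"
proof -
  have "lam ^ (a - 1) = lam ^ (b - 1)" using assms t_Suc_diff by simp
  then have "a - 1 = b - 1" using lam_pos lam_less_1
    by (metis power_decreasing_iff order_antisym order_refl)
  then show ?thesis using assms by simp
qed

lemma t_less_sup: "t k < t_sup"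
proof (cases "k < 2")
  case False
  then obtain n where Suc: "k = Suc (Suc n)" by (metis add_2_eq_Suc le_add_diff_inverse not_less)
  have "(\<Sum>i\<le>n. lam ^ i) = (1 - lam ^ Suc n) / (1 - lam)"
    using lam_less_1 sum_gp_strict[of lam "Suc n"] by (simp add: lessThan_Suc_atMost[symmetric])
  also have "\<dots> < 1 / (1 - lam)"
    using lam_less_1 lam_pos by (simp add: divide_strict_right_mono)
  finally show ?thesis using Suc by (simp add: ladder_t_Suc_Suc t_sup_def)
qed (use lam_less_1 in \<open>auto simp: t_sup_def less_2_cases_iff\<close>)

lemma t_tendsto_sup: "t \<longlonglongrightarrow> t_sup"
proof -
  have "(\<lambda>n. t (Suc (Suc n))) \<longlonglongrightarrow> t_sup"
    unfolding ladder_t_Suc_Suc t_sup_def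
    using LIMSEQ_Suc[OF geometric_sums[of lam, unfolded sums_def]] lam_pos lam_less_1
    by (simp add: lessThan_Suc_atMost)
  then have "(\<lambda>n. t (n + 2)) \<longlonglongrightarrow> t_sup" by (simp add: numeral_2_eq_2)
  then show ?thesis by (rule LIMSEQ_offset)
qed

lemma one_less_sup: "1 < t_sup"
  using t_less_sup[of 2] by simp

lemma L_edge_vertices:
  obtains j where "Lvert lam k = vec2 (t (j+1)) (t j)" "Lvert lam (Suc k) = vec2 (t (j+2)) (t j)"
  | j where "1 \<le> j" "Lvert lam k = vec2 (t (j+2)) (t j)" "Lvert lam (Suc k) = vec2 (t (j+2)) (t (j+1))"
proof (cases k rule: nat_cases_0_odd_even)
  case 1 then show ?thesis using that(1)[of 0] Lvert_odd[of lam 0] by (simp add: Lvert_0)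
next
  case (2 m) then show ?thesis using that(1)[of "m+1"] Lvert_odd[of lam m] Lvert_even[of lam m]
    by (simp add: eval_nat_numeral)
next
  case (3 m)
  have "Suc k = Suc (2*(m+1))" using 3 by simp
  then show ?thesis using 3 that(2)[of "m+1"] Lvert_odd[of lam "m+1"] Lvert_even[of lam m]
    by (simp add: eval_nat_numeral)
qed

lemma L_horiz_edge:
  obtains k where "Lvert lam k = vec2 (t (j+1)) (t j)" "Lvert lam (Suc k) = vec2 (t (j+2)) (t j)"
proof (cases j)
  case 0 then show ?thesis using that[of 0] Lvert_odd[of lam 0] by (simp add: Lvert_0)
next
  case (Suc m) then show ?thesis using that[of "Suc (2*m)"] Lvert_odd[of lam m] Lvert_even[of lam m]
    by (simp add: eval_nat_numeral)
qed

lemma L_vert_edge: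
  assumes "1 \<le> j"
  obtains k where "Lvert lam k = vec2 (t (j+2)) (t j)" "Lvert lam (Suc k) = vec2 (t (j+2)) (t (j+1))"
proof -
  obtain m where j: "j = Suc m" using assms by (cases j) auto
  have "Suc (Suc (Suc (2*m))) = Suc (2*(m+1))" by simp
  then show ?thesis using j that[of "Suc (Suc (2*m))"] Lvert_odd[of lam "m+1"] Lvert_even[of lam m]
    by (simp add: eval_nat_numeral)
qed

lemma U_horiz_edge:
  assumes "1 \<le> j"
  obtains k where "Uvert lam k = vec2 (t j) (t (j+2))" "Uvert lam (Suc k) = vec2 (t (j+1)) (t (j+2))"
proof -
  obtain k where "Lvert lam k = vec2 (t (j+2)) (t j)" "Lvert lam (Suc k) = vec2 (t (j+2)) (t (j+1))"
    using L_vert_edge[OF assms] .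
  then show ?thesis using that[of k] by (simp add: Uvert_swap_xy)
qed

lemma U_vert_edge:
  obtains k where "Uvert lam k = vec2 (t j) (t (j+1))" "Uvert lam (Suc k) = vec2 (t j) (t (j+2))"
proof -
  obtain k where "Lvert lam k = vec2 (t (j+1)) (t j)" "Lvert lam (Suc k) = vec2 (t (j+2)) (t j)"
    using L_horiz_edge .
  then show ?thesis using that[of k] by (simp add: Uvert_swap_xy)
qed

definition L_horiz :: "nat \<Rightarrow> (real^2) set" where
  "L_horiz j = {z. z$2 = t j \<and> t (j+1) < z$1 \<and> z$1 < t (j+2)}"
definition L_vert :: "nat \<Rightarrow> (real^2) set" where
  "L_vert j = {z. z$1 = t (j+2) \<and> t j < z$2 \<and> z$2 < t (j+1)}"
definition U_horiz :: "nat \<Rightarrow> (real^2) set" where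
  "U_horiz j = {z. z$2 = t (j+2) \<and> t j < z$1 \<and> z$1 < t (j+1)}"
definition U_vert :: "nat \<Rightarrow> (real^2) set" where
  "U_vert j = {z. z$1 = t j \<and> t (j+1) < z$2 \<and> z$2 < t (j+2)}"
definition L_horiz_cl :: "nat \<Rightarrow> (real^2) set" where
  "L_horiz_cl j = {z. z$2 = t j \<and> t (j+1) \<le> z$1 \<and> z$1 \<le> t (j+2)}"
definition L_vert_cl :: "nat \<Rightarrow> (real^2) set" where
  "L_vert_cl j = {z. z$1 = t (j+2) \<and> t j \<le> z$2 \<and> z$2 \<le> t (j+1)}"

lemma L_horiz_segments:
  "open_segment (vec2 (t (j+1)) (t j)) (vec2 (t (j+2)) (t j)) = L_horiz j"
  "closed_segment (vec2 (t (j+1)) (t j)) (vec2 (t (j+2)) (t j)) = L_horiz_cl j"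
  using t_steps(2)[of j]
  by (simp_all add: open_segment_horizontal closed_segment_horizontal L_horiz_def L_horiz_cl_def)

lemma L_vert_segments:
  assumes "1 \<le> j"
  shows "open_segment (vec2 (t (j+2)) (t j)) (vec2 (t (j+2)) (t (j+1))) = L_vert j"
    "closed_segment (vec2 (t (j+2)) (t j)) (vec2 (t (j+2)) (t (j+1))) = L_vert_cl j"
  using t_less_Suc[OF assms]
  by (simp_all add: open_segment_vertical closed_segment_vertical L_vert_def L_vert_cl_def)

lemma U_horiz_swap: "U_horiz j = swap_xy ` L_vert j"
  by (auto simp: U_horiz_def L_vert_def mem_swap_xy_image)

lemma U_vert_swap: "U_vert j = swap_xy ` L_horiz j"
  by (auto simp: U_vert_def L_horiz_def mem_swap_xy_image)

lemma L_horiz_open_edge: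
  obtains k where "open_segment (Lvert lam k) (Lvert lam (Suc k)) = L_horiz j"
    "closed_segment (Lvert lam k) (Lvert lam (Suc k)) = L_horiz_cl j"
proof -
  obtain k where "Lvert lam k = vec2 (t (j+1)) (t j)" "Lvert lam (Suc k) = vec2 (t (j+2)) (t j)"
    by (rule L_horiz_edge)
  then show ?thesis using that[of k] by (simp only: L_horiz_segments)
qed

lemma L_vert_open_edge:
  assumes "1 \<le> j"
  obtains k where "open_segment (Lvert lam k) (Lvert lam (Suc k)) = L_vert j"
    "closed_segment (Lvert lam k) (Lvert lam (Suc k)) = L_vert_cl j"
proof -
  obtain k where "Lvert lam k = vec2 (t (j+2)) (t j)" "Lvert lam (Suc k) = vec2 (t (j+2)) (t (j+1))"
    using L_vert_edge[OF assms] .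
  then show ?thesis using that[of k] L_vert_segments[OF assms] by simp_all
qed

lemma L_edge_segments:
  "\<exists>j. open_segment (Lvert lam k) (Lvert lam (Suc k)) = L_horiz j
        \<and> closed_segment (Lvert lam k) (Lvert lam (Suc k)) = L_horiz_cl j
     \<or> open_segment (Lvert lam k) (Lvert lam (Suc k)) = L_vert j
        \<and> closed_segment (Lvert lam k) (Lvert lam (Suc k)) = L_vert_cl j"
proof (cases k rule: L_edge_vertices)
  case (1 j) then show ?thesis using L_horiz_segments[of j] by auto
next
  case (2 j) then show ?thesis using L_vert_segments[of j] by auto
qed

lemma L_open_edges:
  "(\<Union>k. open_segment (Lvert lam k) (Lvert lam (Suc k))) = (\<Union>j. L_horiz j \<union> L_vert j)"
    (is "?E = _")
proof (intro subset_antisym UN_least Un_least)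
  fix j
  obtain k where "open_segment (Lvert lam k) (Lvert lam (Suc k)) = L_horiz j"
    "closed_segment (Lvert lam k) (Lvert lam (Suc k)) = L_horiz_cl j"
    by (rule L_horiz_open_edge)
  then show "L_horiz j \<subseteq> ?E" by blast
  show "L_vert j \<subseteq> ?E"
  proof (cases "j = 0")
    case False
    then obtain k where "open_segment (Lvert lam k) (Lvert lam (Suc k)) = L_vert j"
      "closed_segment (Lvert lam k) (Lvert lam (Suc k)) = L_vert_cl j"
      using L_vert_open_edge[of j] by auto
    then show ?thesis by blast
  qed (auto simp: L_vert_def)
next
  fix k show "open_segment (Lvert lam k) (Lvert lam (Suc k)) \<subseteq> (\<Union>j. L_horiz j \<union> L_vert j)"
    using L_edge_segments[of k] by blast
qed

lemma Lpath_eq: "Lpath lam = (\<Union>j. L_horiz_cl j \<union> L_vert_cl j)"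
  unfolding Lpath_def
proof (intro subset_antisym UN_least Un_least)
  let ?E = "\<Union>k. closed_segment (Lvert lam k) (Lvert lam (Suc k))"
  fix j
  have horiz: "L_horiz_cl i \<subseteq> ?E" for i
  proof -
    obtain k where "open_segment (Lvert lam k) (Lvert lam (Suc k)) = L_horiz i"
      "closed_segment (Lvert lam k) (Lvert lam (Suc k)) = L_horiz_cl i"
      by (rule L_horiz_open_edge)
    then show ?thesis by blast
  qed
  then show "L_horiz_cl j \<subseteq> ?E" .
  show "L_vert_cl j \<subseteq> ?E"
  proof (cases "j = 0")
    case True
    have "L_vert_cl 0 \<subseteq> L_horiz_cl 0"
      using t_nonneg[of "Suc (Suc 0)"] by (auto simp: L_vert_cl_def L_horiz_cl_def)
    then show ?thesis using True horiz by blast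
  next
    case False
    then obtain k where "open_segment (Lvert lam k) (Lvert lam (Suc k)) = L_vert j"
      "closed_segment (Lvert lam k) (Lvert lam (Suc k)) = L_vert_cl j"
      using L_vert_open_edge[of j] by auto
    then show ?thesis by blast
  qed
next
  fix k show "closed_segment (Lvert lam k) (Lvert lam (Suc k)) \<subseteq> (\<Union>j. L_horiz_cl j \<union> L_vert_cl j)"
    using L_edge_segments[of k] by blast
qed

lemma Upath_eq_swap: "Upath lam = swap_xy ` Lpath lam"
  unfolding Upath_def Lpath_def Uvert_swap_xy image_UN
  using closed_segment_linear_image[OF linear_swap_xy] by simp

lemma U_open_edges:
  "(\<Union>k. open_segment (Uvert lam k) (Uvert lam (Suc k))) = swap_xy ` (\<Union>j. L_horiz j \<union> L_vert j)"
  unfolding L_open_edges[symmetric] Uvert_swap_xy image_UN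
  using open_segment_linear_image[OF linear_swap_xy inj_swap_xy] by simp

lemma U_edge_vertices:
  obtains i where "1 \<le> i" "Uvert lam k = vec2 (t i) (t (i+2))" "Uvert lam (Suc k) = vec2 (t (i+1)) (t (i+2))"
  | i where "Uvert lam k = vec2 (t i) (t (i+1))" "Uvert lam (Suc k) = vec2 (t i) (t (i+2))"
  by (cases k rule: L_edge_vertices) (use that in \<open>simp_all add: Uvert_swap_xy\<close>)

definition L_edges :: "(real^2) set" where "L_edges = (\<Union>j. L_horiz j \<union> L_vert j)"
definition U_edges :: "(real^2) set" where "U_edges = (\<Union>j. U_horiz j \<union> U_vert j)"

lemma U_edges_swap: "U_edges = swap_xy ` L_edges"
  by (auto simp: U_edges_def L_edges_def U_horiz_swap U_vert_swap)

lemma L_edges_below_diag: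
  assumes "z \<in> L_edges" shows "z$2 < z$1"
proof -
  obtain j where "z \<in> L_horiz j \<or> z \<in> L_vert j" using assms by (auto simp: L_edges_def)
  then show ?thesis using t_mono[of j "j+1"] t_mono[of "j+1" "j+2"] by (auto simp: L_horiz_def L_vert_def)
qed

lemma U_edges_above_diag: "z \<in> U_edges \<Longrightarrow> z$1 < z$2"
  using L_edges_below_diag by (auto simp: U_edges_swap)

lemma L_edges_notin_U_edges: "z \<in> L_edges \<Longrightarrow> z \<notin> U_edges"
  using L_edges_below_diag U_edges_above_diag by fastforce

lemma L_horiz_unique: "z \<in> L_horiz j \<Longrightarrow> z \<in> L_horiz k \<Longrightarrow> j = k"
  using t_less_imp_less[of "j+1" "k+2"] t_less_imp_less[of "k+1" "j+2"] by (auto simp: L_horiz_def)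

lemma L_vert_unique: "z \<in> L_vert j \<Longrightarrow> z \<in> L_vert k \<Longrightarrow> j = k"
  using t_less_imp_less[of j "k+1"] t_less_imp_less[of k "j+1"] by (auto simp: L_vert_def)

lemma L_horiz_notin_L_vert: "z \<in> L_horiz j \<Longrightarrow> z \<notin> L_vert k"
  using t_less_imp_less[of "j+1" "k+2"] t_less_imp_less[of "k+2" "j+2"] by (auto simp: L_horiz_def L_vert_def)

section \<open>The gluing\<close>

definition shift_H :: "nat \<Rightarrow> real^2" where "shift_H j = vec2 0 (t (j+3) - t j)"
definition shift_V :: "nat \<Rightarrow> real^2" where "shift_V j = vec2 (t (j-1) - t (j+2)) 0"

definition glued :: "real^2 \<Rightarrow> real^2 \<Rightarrow> bool" where
  "glued p q \<longleftrightarrow> (\<exists>j. p \<in> L_horiz j \<and> q = p + shift_H j)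
     \<or> (\<exists>j. 1 \<le> j \<and> p \<in> L_vert j \<and> q = p + shift_V j)"

lemma L_horiz_shift: "z \<in> L_horiz j \<Longrightarrow> z + shift_H j \<in> U_horiz (j+1)"
  by (auto simp: L_horiz_def U_horiz_def shift_H_def eval_nat_numeral)

lemma L_vert_shift: "1 \<le> j \<Longrightarrow> z \<in> L_vert j \<Longrightarrow> z + shift_V j \<in> U_vert (j-1)"
  by (auto simp: L_vert_def U_vert_def shift_V_def)

text \<open>An edge of L can only be translated onto a parallel edge of U of the same length, and
  the lengths \<lambda>^k of the horizontal (resp. vertical) edges are pairwise distinct.\<close>

lemma glued_if_horizontal_edge_translates:
  assumes p: "p \<in> L_horiz j"
    and e: "{vec2 (t (j+1)) (t j) + tau, vec2 (t (j+2)) (t j) + tau} = {Uvert lam i, Uvert lam (Suc i)}"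
  shows "glued p (p + tau)"
proof -
  have lt: "t (j+1) < t (j+2)" using t_steps(2)[of j] by simp
  show ?thesis
  proof (cases i rule: U_edge_vertices)
    case (1 m)
    have "tau = vec2 (t m - t (j+1)) (t (m+2) - t j) \<and> t (j+2) - t (j+1) = t (m+1) - t m"
      using translated_segment_eq[of "t (j+1)" "t j" tau "t (j+2)" "t j" "t m" "t (m+2)" "t (m+1)" "t (m+2)"]
        e 1 lt t_le_Suc[of m] by simp
    moreover from this have "m = j + 1" using t_Suc_diff_inj[of "j+1" m] 1 by simp
    ultimately have "tau = shift_H j" by (simp add: shift_H_def)
    then show ?thesis using p by (auto simp: glued_def)
  next
    case (2 m)
    then show ?thesis
      using translated_segment_eq[of "t (j+1)" "t j" tau "t (j+2)" "t j" "t m" "t (m+1)" "t m" "t (m+2)"]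
        e lt t_steps(2)[of m] by simp
  qed
qed

lemma glued_if_vertical_edge_translates:
  assumes j: "1 \<le> j" and p: "p \<in> L_vert j"
    and e: "{vec2 (t (j+2)) (t j) + tau, vec2 (t (j+2)) (t (j+1)) + tau} = {Uvert lam i, Uvert lam (Suc i)}"
  shows "glued p (p + tau)"
proof -
  have lt: "t j < t (j+1)" using t_less_Suc[OF j] by simp
  show ?thesis
  proof (cases i rule: U_edge_vertices)
    case (1 m)
    then show ?thesis
      using translated_segment_eq[of "t (j+2)" "t j" tau "t (j+2)" "t (j+1)" "t m" "t (m+2)" "t (m+1)" "t (m+2)"]
        e lt t_less_Suc[of m] by simp
  next
    case (2 m)
    have "tau = vec2 (t m - t (j+2)) (t (m+1) - t j) \<and> t (j+1) - t j = t (m+2) - t (m+1)"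
      using translated_segment_eq[of "t (j+2)" "t j" tau "t (j+2)" "t (j+1)" "t m" "t (m+1)" "t m" "t (m+2)"]
        e 2 lt t_steps(2)[of m] by simp
    moreover from this have "j = m + 1" using t_Suc_diff_inj[of j "m+1"] j by simp
    ultimately have "tau = shift_V j" by (simp add: shift_V_def)
    then show ?thesis using p j by (auto simp: glued_def)
  qed
qed

lemma glued_if_endpoints_translate:
  assumes p: "p \<in> open_segment (Lvert lam k) (Lvert lam (Suc k))"
    and e: "{Lvert lam k + tau, Lvert lam (Suc k) + tau} = {Uvert lam i, Uvert lam (Suc i)}"
  shows "glued p (p + tau)"
proof (cases k rule: L_edge_vertices)
  case (1 j)
  then show ?thesis
    using glued_if_horizontal_edge_translates[of p j tau i] p e L_horiz_segments(1)[of j] by simp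
next
  case (2 j)
  then show ?thesis
    using glued_if_vertical_edge_translates[of j p tau i] p e L_vert_segments(1)[of j] by simp
qed

lemma ladder_glueI:
  assumes "p \<in> open_segment (Lvert lam k) (Lvert lam (Suc k))"
    "Lvert lam k + tau = Uvert lam j" "Lvert lam (Suc k) + tau = Uvert lam (Suc j)"
  shows "ladder_glue lam p (p + tau)"
  unfolding ladder_glue_def translate_closed_segment using assms by metis

lemma ladder_glue_if_glued:
  assumes "glued p q"
  shows "ladder_glue lam p q"
  using assms unfolding glued_def
proof (elim disjE exE conjE)
  fix j assume pj: "p \<in> L_horiz j" and q: "q = p + shift_H j"
  obtain k where "Lvert lam k = vec2 (t (j+1)) (t j)" "Lvert lam (Suc k) = vec2 (t (j+2)) (t j)"
    by (rule L_horiz_edge)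
  moreover obtain i where "Uvert lam i = vec2 (t (j+1)) (t (j+3))"
    "Uvert lam (Suc i) = vec2 (t (j+2)) (t (j+3))"
    using U_horiz_edge[of "j+1"] by (auto simp: eval_nat_numeral)
  ultimately show "ladder_glue lam p q"
    using ladder_glueI[of p k "shift_H j" i] pj q L_horiz_segments(1)[of j] by (simp add: shift_H_def)
next
  fix j assume j: "1 \<le> j" and pj: "p \<in> L_vert j" and q: "q = p + shift_V j"
  then obtain m where m: "j = Suc m" by (cases j) auto
  obtain k where "Lvert lam k = vec2 (t (j+2)) (t j)" "Lvert lam (Suc k) = vec2 (t (j+2)) (t (j+1))"
    using L_vert_edge[OF j] .
  moreover obtain i where "Uvert lam i = vec2 (t m) (t (m+1))" "Uvert lam (Suc i) = vec2 (t m) (t (m+2))"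
    by (rule U_vert_edge)
  ultimately show "ladder_glue lam p q"
    using ladder_glueI[of p k "shift_V j" i] pj q m L_vert_segments(1)[OF j] by (simp add: shift_V_def)
qed

lemma ladder_glue_iff_glued: "ladder_glue lam p q \<longleftrightarrow> glued p q"
proof
  assume "ladder_glue lam p q"
  then obtain k j tau where "p \<in> open_segment (Lvert lam k) (Lvert lam (Suc k))"
    "{Lvert lam k + tau, Lvert lam (Suc k) + tau} = {Uvert lam j, Uvert lam (Suc j)}" "q = p + tau"
    unfolding ladder_glue_def translate_closed_segment closed_segment_eq by blast
  then show "glued p q" using glued_if_endpoints_translate by blast
qed (rule ladder_glue_if_glued)

lemma glued_L_U: "glued p q \<Longrightarrow> p \<in> L_edges \<and> q \<in> U_edges"
  unfolding glued_def L_edges_def U_edges_def using L_horiz_shift L_vert_shift by blast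

lemma glued_functional: "glued p q \<Longrightarrow> glued p q' \<Longrightarrow> q = q'"
  unfolding glued_def using L_horiz_unique L_vert_unique L_horiz_notin_L_vert by metis

lemma glued_swap: "glued p q \<Longrightarrow> glued (swap_xy q) (swap_xy p)"
  unfolding glued_def
proof (elim disjE exE conjE)
  fix j assume "p \<in> L_horiz j" "q = p + shift_H j"
  then have "swap_xy q \<in> L_vert (j+1)" "swap_xy p = swap_xy q + shift_V (j+1)"
    using L_horiz_shift[of p j] by (simp_all add: U_horiz_swap mem_swap_xy_image)
      (simp add: shift_H_def shift_V_def swap_xy_def vec_eq_iff forall_2)
  then show "(\<exists>j. swap_xy q \<in> L_horiz j \<and> swap_xy p = swap_xy q + shift_H j)
    \<or> (\<exists>j. 1 \<le> j \<and> swap_xy q \<in> L_vert j \<and> swap_xy p = swap_xy q + shift_V j)"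
    by (metis le_add2)
next
  fix j assume j: "1 \<le> j" "p \<in> L_vert j" "q = p + shift_V j"
  then obtain k where k: "j = Suc k" by (cases j) auto
  then have "swap_xy q \<in> L_horiz k" "swap_xy p = swap_xy q + shift_H k"
    using j L_vert_shift[of j p] by (simp_all add: U_vert_swap mem_swap_xy_image)
      (simp add: shift_H_def shift_V_def swap_xy_def vec_eq_iff forall_2)
  then show "(\<exists>j. swap_xy q \<in> L_horiz j \<and> swap_xy p = swap_xy q + shift_H j)
    \<or> (\<exists>j. 1 \<le> j \<and> swap_xy q \<in> L_vert j \<and> swap_xy p = swap_xy q + shift_V j)"
    by blast
qed

lemma glued_injective: "glued p q \<Longrightarrow> glued p' q \<Longrightarrow> p = p'"
  using glued_swap glued_functional by (metis swap_xy_swap_xy)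

section \<open>The region bounded by L and U\<close>

definition square :: "nat \<Rightarrow> (real^2) set" where "square j = box (vec2 (t j) (t j)) (vec2 (t (j+2)) (t (j+2)))"
definition cl_square :: "nat \<Rightarrow> (real^2) set" where "cl_square j = cbox (vec2 (t j) (t j)) (vec2 (t (j+2)) (t (j+2)))"
definition region where "region = (\<Union>j. square j)"
definition cl_squares where "cl_squares = (\<Union>j. cl_square j)"
definition cl_squares_corner where "cl_squares_corner = insert (vec2 t_sup t_sup) cl_squares"
definition bbox where "bbox = cbox (vec2 0 0) (vec2 t_sup t_sup)"
definition boundary where "boundary = closure (Lpath lam \<union> Upath lam)"

lemma mem_square: "z \<in> square j \<longleftrightarrow> t j < z$1 \<and> z$1 < t (j+2) \<and> t j < z$2 \<and> z$2 < t (j+2)"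
  by (simp add: square_def mem_box_vec2)

lemma mem_cl_square: "z \<in> cl_square j \<longleftrightarrow> t j \<le> z$1 \<and> z$1 \<le> t (j+2) \<and> t j \<le> z$2 \<and> z$2 \<le> t (j+2)"
  by (simp add: cl_square_def mem_cbox_vec2)

lemma mem_bbox: "z \<in> bbox \<longleftrightarrow> 0 \<le> z$1 \<and> z$1 \<le> t_sup \<and> 0 \<le> z$2 \<and> z$2 \<le> t_sup"
  by (simp add: bbox_def mem_cbox_vec2)

lemma open_region: "open region" unfolding region_def square_def by auto

lemma region_subset_bbox: "region \<subseteq> bbox"
proof
  fix z assume "z \<in> region"
  then obtain j where "z \<in> square j" by (auto simp: region_def)
  then show "z \<in> bbox" using t_nonneg[of j] t_less_sup[of "j+2"] by (auto simp: mem_square mem_bbox)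
qed

lemma cl_squares_subset_bbox: "cl_squares \<subseteq> bbox"
proof
  fix z assume "z \<in> cl_squares"
  then obtain j where "z \<in> cl_square j" by (auto simp: cl_squares_def)
  then show "z \<in> bbox" using t_nonneg[of j] t_less_sup[of "j+2"] by (auto simp: mem_cl_square mem_bbox)
qed

lemma cl_squares_corner_subset_bbox: "cl_squares_corner \<subseteq> bbox"
  using cl_squares_subset_bbox one_less_sup by (auto simp: cl_squares_corner_def mem_bbox)

lemma bounded_region: "bounded region"
  using region_subset_bbox bounded_cbox bounded_subset bbox_def by metis

lemma swap_xy_mem_square: "swap_xy z \<in> square j \<longleftrightarrow> z \<in> square j" by (auto simp: mem_square)

lemma swap_xy_mem_cl_square: "swap_xy z \<in> cl_square j \<longleftrightarrow> z \<in> cl_square j" by (auto simp: mem_cl_square)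

lemma swap_xy_mem_region: "swap_xy z \<in> region \<longleftrightarrow> z \<in> region" by (simp add: region_def swap_xy_mem_square)

lemma swap_xy_mem_cl_squares: "swap_xy z \<in> cl_squares \<longleftrightarrow> z \<in> cl_squares" by (simp add: cl_squares_def swap_xy_mem_cl_square)

lemma swap_xy_mem_cl_squares_corner: "swap_xy z \<in> cl_squares_corner \<longleftrightarrow> z \<in> cl_squares_corner"
  by (auto simp: cl_squares_corner_def swap_xy_mem_cl_squares) (metis swap_xy_vec2 swap_xy_swap_xy)

lemma swap_xy_mem_bbox: "swap_xy z \<in> bbox \<longleftrightarrow> z \<in> bbox" by (auto simp: mem_bbox)

lemma Lpath_subset_cl_squares: "Lpath lam \<subseteq> cl_squares"
proof
  fix z assume "z \<in> Lpath lam"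
  then obtain j where "z \<in> L_horiz_cl j \<or> z \<in> L_vert_cl j" by (auto simp: Lpath_eq)
  then have "z \<in> cl_square j"
    using t_mono[of j "j+1"] t_mono[of "j+1" "j+2"] t_mono[of j "j+2"]
    by (auto simp: L_horiz_cl_def L_vert_cl_def mem_cl_square)
  then show "z \<in> cl_squares" by (auto simp: cl_squares_def)
qed

lemma Upath_subset_cl_squares: "Upath lam \<subseteq> cl_squares"
  using Lpath_subset_cl_squares by (auto simp: Upath_eq_swap swap_xy_mem_cl_squares)

lemma Lpath_notin_region: "z \<in> Lpath lam \<Longrightarrow> z \<notin> region"
proof
  assume "z \<in> Lpath lam" "z \<in> region"
  then obtain j i where j: "z \<in> L_horiz_cl j \<or> z \<in> L_vert_cl j" and i: "z \<in> square i" by (auto simp: Lpath_eq region_def)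
  show False
  proof (cases "z \<in> L_horiz_cl j")
    case True
    then have "t i < t j" using i by (auto simp: L_horiz_cl_def mem_square)
    then have "i + 2 \<le> j + 1" using t_less_imp_less by fastforce
    then have "t (i+2) \<le> t (j+1)" by (rule t_mono)
    then show False using True i by (auto simp: L_horiz_cl_def mem_square)
  next
    case False
    then have h: "z \<in> L_vert_cl j" using j by auto
    then have "t i < t (j+1)" using i by (auto simp: L_vert_cl_def mem_square)
    then have "i + 2 \<le> j + 2" using t_less_imp_less by fastforce
    then have "t (i+2) \<le> t (j+2)" by (rule t_mono)
    then show False using h i by (auto simp: L_vert_cl_def mem_square)
  qed
qed

lemma Upath_notin_region: "z \<in> Upath lam \<Longrightarrow> z \<notin> region"
  using Lpath_notin_region by (auto simp: Upath_eq_swap swap_xy_mem_region)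

lemma region_Int_boundary: "region \<inter> boundary = {}"
  unfolding boundary_def using open_Int_closure_eq_empty[OF open_region] Lpath_notin_region Upath_notin_region by blast

lemma bottom_side_minus_region:
  assumes z: "z \<in> cl_square j" "z \<notin> region" "z$2 = t j"
  shows "z \<in> Lpath lam"
proof -
  have zz: "t j \<le> z$1" "z$1 \<le> t (j+2)" using z(1) by (auto simp: mem_cl_square)
  have "z \<in> L_horiz_cl 0 \<union> L_horiz_cl 1 \<union> L_horiz_cl j"
  proof (cases "j \<le> 1")
    case True
    then have "t j = 0" by (cases j) auto
    then show ?thesis using True z(3) zz by (cases j) (auto simp: L_horiz_cl_def)
  next
    case False
    then obtain i where i: "j = Suc i" "1 \<le> i" by (cases j) auto
    have "t i < t j" "t j < t (i+2)" using i t_strict_mono by auto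
    then have "\<not> z$1 < t (i+2)"
      using z(2,3) zz by (auto simp: region_def mem_square)
    then show ?thesis using i z(3) zz by (auto simp: L_horiz_cl_def)
  qed
  then show ?thesis by (auto simp: Lpath_eq)
qed

lemma right_side_minus_region:
  assumes z: "z \<in> cl_square j" "z \<notin> region" "z$1 = t (j+2)"
  shows "z \<in> Lpath lam"
proof -
  have zz: "t j \<le> z$2" "z$2 \<le> t (j+2)" using z(1) by (auto simp: mem_cl_square)
  have "t (j+1) < t (j+2)" "t (j+2) < t (j+3)" using t_strict_mono by auto
  then have "\<not> t (j+1) < z$2" using z(2,3) zz by (auto simp: region_def mem_square)
  then have "z \<in> L_vert_cl j" using z(3) zz by (auto simp: L_vert_cl_def)
  then show ?thesis by (auto simp: Lpath_eq)
qed

lemma cl_squares_minus_region: "z \<in> cl_squares \<Longrightarrow> z \<notin> region \<Longrightarrow> z \<in> Lpath lam \<union> Upath lam"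
proof -
  assume z: "z \<in> cl_squares" "z \<notin> region"
  then obtain j where j: "z \<in> cl_square j" by (auto simp: cl_squares_def)
  have "w \<in> Lpath lam" if "w \<in> cl_square j" "w \<notin> region" "w$2 \<le> w$1" for w
  proof -
    have "w \<notin> square j" using that(2) by (auto simp: region_def)
    then have "w$1 = t j \<or> w$1 = t (j+2) \<or> w$2 = t j \<or> w$2 = t (j+2)"
      using that(1) by (auto simp: mem_square mem_cl_square)
    then have "w$2 = t j \<or> w$1 = t (j+2)" using that(1,3) by (auto simp: mem_cl_square)
    then show ?thesis using that bottom_side_minus_region right_side_minus_region by blast
  qed
  from this[of z] this[of "swap_xy z"] show ?thesis using j z
    by (cases "z$2 \<le> z$1") (auto simp: swap_xy_mem_cl_square swap_xy_mem_region Upath_eq_swap mem_swap_xy_image)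
qed

lemma corner_in_boundary: "vec2 t_sup t_sup \<in> boundary"
proof -
  have "(\<lambda>n. Lvert lam (Suc (2*n))) \<longlonglongrightarrow> vec2 t_sup t_sup"
  proof -
    have a: "(\<lambda>n. t (n+2)) \<longlonglongrightarrow> t_sup" "(\<lambda>n. t (n+1)) \<longlonglongrightarrow> t_sup"
      using LIMSEQ_ignore_initial_segment[OF t_tendsto_sup, of 2] LIMSEQ_ignore_initial_segment[OF t_tendsto_sup, of 1]
      by auto
    have "(\<lambda>n. vec2 (t (n+2)) (t (n+1))) \<longlonglongrightarrow> vec2 t_sup t_sup"
    proof (rule vec_tendstoI)
      fix i :: 2
      consider "i = 1" | "i = 2" using exhaust_2 by blast
      then show "(\<lambda>n. vec2 (t (n+2)) (t (n+1)) $ i) \<longlonglongrightarrow> vec2 t_sup t_sup $ i" using a by cases auto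
    qed
    then show ?thesis using Lvert_odd by simp
  qed
  moreover have "Lvert lam (Suc (2*n)) \<in> Lpath lam \<union> Upath lam" for n
    unfolding Lpath_def by (auto intro!: exI[of _ "Suc (2*n)"])
  ultimately show ?thesis unfolding boundary_def by (meson closure_sequential)
qed

lemma region_subset_cl_squares: "region \<subseteq> cl_squares"
  unfolding region_def cl_squares_def square_def cl_square_def using box_subset_cbox by blast

lemma cl_squares_corner_subset_tail:
  "cl_squares_corner \<subseteq> (\<Union>i<N. cl_square i) \<union> {v. t N \<le> v$1 \<and> t N \<le> v$2}"
proof
  fix v assume "v \<in> cl_squares_corner"
  then consider "v = vec2 t_sup t_sup" | i where "v \<in> cl_square i"
    by (auto simp: cl_squares_corner_def cl_squares_def)
  then show "v \<in> (\<Union>i<N. cl_square i) \<union> {v. t N \<le> v$1 \<and> t N \<le> v$2}"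
  proof cases
    case 1 then show ?thesis using t_less_sup[of N] by (auto intro: less_imp_le)
  next
    case (2 i) then show ?thesis using t_mono[of N i] by (cases "i < N") (auto simp: mem_cl_square)
  qed
qed

lemma closed_cl_squares_corner: "closed cl_squares_corner"
proof -
  have "\<exists>T. open T \<and> z \<in> T \<and> T \<subseteq> - cl_squares_corner" if z: "z \<notin> cl_squares_corner" for z
  proof (cases "z \<in> bbox")
    case False
    moreover have "open (- bbox)" unfolding bbox_def by (rule open_Compl) (rule closed_cbox)
    ultimately show ?thesis using cl_squares_corner_subset_bbox by blast
  next
    case True
    have "z \<noteq> vec2 t_sup t_sup" using z by (auto simp: cl_squares_corner_def)
    with True have "min (z$1) (z$2) < t_sup" by (auto simp: mem_bbox min_def eq_vec2_iff)
    then obtain N where N: "min (z$1) (z$2) < t N"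
      using order_tendstoD(1)[OF t_tendsto_sup] by (metis eventually_sequentially order_refl)
    let ?F = "(\<Union>i<N. cl_square i) \<union> {v. t N \<le> v$1 \<and> t N \<le> v$2}"
    have "closed {v::real^2. t N \<le> v$1 \<and> t N \<le> v$2}"
      using closed_Int[OF closed_halfspace_component_ge_cart[where i=1 and a="t N"]
          closed_halfspace_component_ge_cart[where i=2 and a="t N"]]
      by (simp add: Collect_conj_eq)
    moreover have "closed (\<Union>i<N. cl_square i)" by (intro closed_UN) (auto simp: cl_square_def)
    ultimately have "open (- ?F)" by (intro open_Compl closed_Un)
    moreover have "z \<notin> (\<Union>i<N. cl_square i) \<union> {v. t N \<le> v$1 \<and> t N \<le> v$2}"
      using z N by (auto simp: cl_squares_corner_def cl_squares_def)
    ultimately show ?thesis using cl_squares_corner_subset_tail[of N] by blast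
  qed
  then show ?thesis unfolding closed_def by (subst open_subopen) blast
qed

lemma boundary_subset_cl_squares_corner: "boundary \<subseteq> cl_squares_corner"
  unfolding boundary_def using Lpath_subset_cl_squares Upath_subset_cl_squares closed_cl_squares_corner
  by (intro closure_minimal) (auto simp: cl_squares_corner_def)

lemma cl_squares_corner_minus_region: "z \<in> cl_squares_corner \<Longrightarrow> z \<notin> region \<Longrightarrow> z \<in> boundary"
  using corner_in_boundary cl_squares_minus_region closure_subset unfolding cl_squares_corner_def boundary_def by blast

lemma frontier_region: "frontier region \<subseteq> boundary"
proof
  fix z assume "z \<in> frontier region"
  then have "z \<in> closure region" "z \<notin> region"
    using open_region by (auto simp: frontier_def interior_open)
  moreover have "closure region \<subseteq> cl_squares_corner"
    using region_subset_cl_squares closed_cl_squares_corner by (intro closure_minimal) (auto simp: cl_squares_corner_def)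
  ultimately show "z \<in> boundary" using cl_squares_corner_minus_region by blast
qed

lemma escape_path_below_diag:
  assumes "z \<in> bbox" "z \<notin> cl_squares_corner" "z$2 \<le> z$1"
  shows "\<exists>S. connected S \<and> z \<in> S \<and> S \<inter> cl_squares_corner = {} \<and> (\<exists>w\<in>S. w \<notin> bbox)"
proof -
  have z0: "0 \<le> z$2" using assms by (auto simp: mem_bbox)
  define S where "S = closed_segment (vec2 (z$1) (-1)) (vec2 (z$1) (z$2))"
  have S: "S = {v. v$1 = z$1 \<and> -1 \<le> v$2 \<and> v$2 \<le> z$2}"
    unfolding S_def using z0 by (simp add: closed_segment_vertical)
  have "S \<inter> cl_squares_corner = {}"
  proof (rule ccontr)
    assume "S \<inter> cl_squares_corner \<noteq> {}"
    then obtain v where v: "v \<in> S" "v \<in> cl_squares_corner" by blast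
    then consider "v = vec2 t_sup t_sup" | i where "v \<in> cl_square i" by (auto simp: cl_squares_corner_def cl_squares_def)
    then show False
    proof cases
      case 1
      then have "z = vec2 t_sup t_sup" using v S assms by (auto simp: mem_bbox eq_vec2_iff)
      then show False using assms by (simp add: cl_squares_corner_def)
    next
      case (2 i)
      then have "z \<in> cl_square i" using v S assms by (auto simp: mem_cl_square)
      then show False using assms by (auto simp: cl_squares_corner_def cl_squares_def)
    qed
  qed
  moreover have "z \<in> S" using S z0 by simp
  moreover have "vec2 (z$1) (-1) \<in> S" "vec2 (z$1) (-1) \<notin> bbox" using S z0 by (auto simp: mem_bbox)
  moreover have "connected S" unfolding S_def by simp
  ultimately show ?thesis by blast
qed

lemma escape_path:
  assumes "z \<in> bbox" "z \<notin> cl_squares_corner"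
  shows "\<exists>S. connected S \<and> z \<in> S \<and> S \<inter> cl_squares_corner = {} \<and> (\<exists>w\<in>S. w \<notin> bbox)"
proof (cases "z$2 \<le> z$1")
  case True then show ?thesis using escape_path_below_diag assms by blast
next
  case False
  then obtain S where S: "connected S" "swap_xy z \<in> S" "S \<inter> cl_squares_corner = {}" "\<exists>w\<in>S. w \<notin> bbox"
    using escape_path_below_diag[of "swap_xy z"] assms by (auto simp: swap_xy_mem_bbox swap_xy_mem_cl_squares_corner)
  have "connected (swap_xy ` S)"
    using S(1) linear_continuous_on[OF linear_conv_bounded_linear[THEN iffD1, OF linear_swap_xy]]
    by (metis connected_continuous_image continuous_on_subset subset_UNIV)
  moreover have "z \<in> swap_xy ` S" using S(2) by (simp add: mem_swap_xy_image)
  moreover have "swap_xy ` S \<inter> cl_squares_corner = {}" using S(3) by (auto simp: swap_xy_mem_cl_squares_corner)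
  moreover have "\<exists>w\<in>swap_xy ` S. w \<notin> bbox" using S(4) by (auto simp: swap_xy_mem_bbox)
  ultimately show ?thesis by blast
qed

lemma outside_boundary:
  assumes "z \<notin> region" "z \<notin> boundary"
  shows "z \<in> outside boundary"
proof -
  have zK: "z \<notin> cl_squares_corner" using assms cl_squares_corner_minus_region by blast
  have out: "- bbox \<subseteq> outside boundary"
    using outside_subset_convex[of bbox boundary] boundary_subset_cl_squares_corner cl_squares_corner_subset_bbox unfolding bbox_def by auto
  show ?thesis
  proof (cases "z \<in> bbox")
    case False then show ?thesis using out by blast
  next
    case True
    then obtain S w where S: "connected S" "z \<in> S" "S \<inter> cl_squares_corner = {}" "w \<in> S" "w \<notin> bbox"
      using escape_path zK by blast
    have "S \<subseteq> -boundary" using S(3) boundary_subset_cl_squares_corner by blast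
    then have "connected_component (- boundary) w z" using S by (intro connected_componentI) auto
    moreover have "w \<in> outside boundary" using out S(5) by blast
    ultimately show ?thesis by (rule outside_same_component)
  qed
qed

lemma inside_boundary: "inside boundary = region"
proof
  show "inside boundary \<subseteq> region"
  proof
    fix z assume z: "z \<in> inside boundary"
    then have "z \<notin> boundary" "z \<notin> outside boundary" using inside_Int_outside inside_no_overlap by blast+
    then show "z \<in> region" using outside_boundary by blast
  qed
next
  have "region \<subseteq> inside (frontier region)"
    using interior_inside_frontier[OF bounded_region] open_region by (simp add: interior_open)
  then show "region \<subseteq> inside boundary"
    using inside_mono[OF frontier_region] region_Int_boundary by blast
qed

lemma ladder_region_eq: "ladder_region lam = region"
  using inside_boundary unfolding ladder_region_def boundary_def by simp

section \<open>The quotient surface\<close>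

definition Ypts :: "(real^2) set" where "Ypts = region \<union> L_edges \<union> U_edges"

lemma region_imp_Ypts: "z \<in> region \<Longrightarrow> z \<in> Ypts"
  by (simp add: Ypts_def)

lemma ladder_Y_eq: "ladder_Y lam = Ypts"
proof -
  have "(\<Union>k. open_segment (Uvert lam k) (Uvert lam (Suc k))) = U_edges"
    using U_open_edges U_edges_swap L_edges_def by simp
  then show ?thesis
    unfolding ladder_Y_def ladder_region_eq L_open_edges Ypts_def L_edges_def by simp
qed

lemma L_edges_subset_Lpath: "L_edges \<subseteq> Lpath lam"
  unfolding L_edges_def Lpath_eq
  by (intro UN_mono Un_mono order_refl) (auto simp: L_horiz_def L_vert_def L_horiz_cl_def L_vert_cl_def)

lemma U_edges_subset_Upath: "U_edges \<subseteq> Upath lam"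
  using L_edges_subset_Lpath by (auto simp: U_edges_swap Upath_eq_swap)

lemma L_edges_notin_region: "z \<in> L_edges \<Longrightarrow> z \<notin> region"
  using L_edges_subset_Lpath Lpath_notin_region by blast

lemma U_edges_notin_region: "z \<in> U_edges \<Longrightarrow> z \<notin> region"
  using L_edges_notin_region by (auto simp: U_edges_swap swap_xy_mem_region)

abbreviation grel where "grel \<equiv> ladder_rel lam"

lemma grel_iff: "(p, q) \<in> grel \<longleftrightarrow> p \<in> Ypts \<and> q \<in> Ypts \<and> (p = q \<or> glued p q \<or> glued q p)"
  unfolding ladder_rel_def ladder_Y_eq ladder_glue_iff_glued by simp

lemma equiv_grel: "equiv Ypts grel"
proof (rule equivI)
  show "grel \<subseteq> Ypts \<times> Ypts" using grel_iff by auto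
  show "refl_on Ypts grel" unfolding refl_on_def using grel_iff by auto
  show "sym grel" unfolding sym_def using grel_iff by auto
  show "trans grel" unfolding trans_def
  proof (intro allI impI)
    fix x y z assume "(x, y) \<in> grel" "(y, z) \<in> grel"
    then have Y: "x \<in> Ypts" "z \<in> Ypts" and a: "x = y \<or> glued x y \<or> glued y x" and b: "y = z \<or> glued y z \<or> glued z y"
      using grel_iff by auto
    have "x = z \<or> glued x z \<or> glued z x"
      using a b glued_L_U glued_functional glued_injective L_edges_notin_U_edges by metis
    then show "(x, z) \<in> grel" using Y grel_iff by blast
  qed
qed

lemma grel_two: "(w, a) \<in> grel \<Longrightarrow> (w, b) \<in> grel \<Longrightarrow> a = w \<or> b = w \<or> a = b"
  using grel_iff glued_L_U glued_functional glued_injective L_edges_notin_U_edges by metis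

lemma grel_region: "p \<in> region \<Longrightarrow> (p, q) \<in> grel \<Longrightarrow> q = p"
  using grel_iff glued_L_U L_edges_notin_region U_edges_notin_region by metis

lemma swap_xy_mem_Ypts: "swap_xy z \<in> Ypts \<longleftrightarrow> z \<in> Ypts"
  unfolding Ypts_def U_edges_swap by (auto simp: swap_xy_mem_region mem_swap_xy_image)

abbreviation proj where "proj \<equiv> ladder_proj lam"
abbreviation Xpts where "Xpts \<equiv> ladder_X lam"
abbreviation Xtop where "Xtop \<equiv> ladder_top lam"

lemma openin_Xtop: "openin Xtop W \<longleftrightarrow> ladder_open lam W"
  by (simp add: ladder_top_def istopology_ladder_open)

lemma proj_in_Xpts: "y \<in> Ypts \<Longrightarrow> proj y \<in> Xpts"
  unfolding ladder_X_def ladder_proj_def ladder_Y_eq by (rule quotientI)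

lemma Xpts_proj: "P \<in> Xpts \<Longrightarrow> \<exists>y\<in>Ypts. P = proj y"
  unfolding ladder_X_def ladder_proj_def ladder_Y_eq quotient_def by auto

lemma proj_eq_iff: "y \<in> Ypts \<Longrightarrow> y' \<in> Ypts \<Longrightarrow> proj y = proj y' \<longleftrightarrow> (y, y') \<in> grel"
  unfolding ladder_proj_def using eq_equiv_class_iff[OF equiv_grel] by auto

lemma proj_eq: "(y, y') \<in> grel \<Longrightarrow> proj y = proj y'"
  using proj_eq_iff grel_iff by blast

lemma openin_XtopI: "W \<subseteq> Xpts \<Longrightarrow> openin (top_of_set Ypts) {y \<in> Ypts. proj y \<in> W} \<Longrightarrow> openin Xtop W"
  by (simp add: openin_Xtop ladder_open_def ladder_Y_eq)

lemma openin_XtopD: "openin Xtop W \<Longrightarrow> W \<subseteq> Xpts \<and> openin (top_of_set Ypts) {y \<in> Ypts. proj y \<in> W}"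
  by (simp add: openin_Xtop ladder_open_def ladder_Y_eq)

lemma openin_Xpts: "openin Xtop Xpts"
proof (rule openin_XtopI)
  have "{y \<in> Ypts. proj y \<in> Xpts} = Ypts" using proj_in_Xpts by auto
  then show "openin (top_of_set Ypts) {y \<in> Ypts. proj y \<in> Xpts}" by simp
qed simp

lemma topspace_Xtop: "topspace Xtop = Xpts"
proof
  show "topspace Xtop \<subseteq> Xpts"
    unfolding topspace_def using openin_XtopD by blast
  show "Xpts \<subseteq> topspace Xtop" using openin_Xpts openin_subset by blast
qed

lemma continuous_map_proj: "continuous_map (top_of_set Ypts) Xtop proj"
  unfolding continuous_map_def topspace_Xtop
  using proj_in_Xpts openin_XtopD by auto

lemma continuous_map_from_Xtop:
  assumes W: "openin Xtop W" and S: "\<And>P. P \<in> W \<Longrightarrow> \<phi> P \<in> S"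
    and c: "continuous_on {y \<in> Ypts. proj y \<in> W} (\<phi> \<circ> proj)"
  shows "continuous_map (subtopology Xtop W) (top_of_set S) \<phi>"
proof -
  have WX: "W \<subseteq> Xpts" using openin_XtopD[OF W] by blast
  have top_W: "topspace (subtopology Xtop W) = W" using WX by (auto simp: topspace_Xtop)
  show ?thesis unfolding continuous_map_def
  proof (intro conjI allI impI)
    show "\<phi> \<in> topspace (subtopology Xtop W) \<rightarrow> topspace (top_of_set S)" using S top_W by auto
    fix U assume "openin (top_of_set S) U"
    then obtain V where V: "open V" "U = S \<inter> V" by (auto simp: openin_open)
    have A: "{x \<in> topspace (subtopology Xtop W). \<phi> x \<in> U} = {P \<in> W. \<phi> P \<in> V}" using top_W S V by auto
    define preW where "preW = {y \<in> Ypts. proj y \<in> W}"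
    have preW_open: "openin (top_of_set Ypts) preW" using openin_XtopD[OF W] unfolding preW_def by simp
    have "openin (top_of_set preW) (preW \<inter> (\<phi> \<circ> proj) -` V)"
      using continuous_openin_preimage_gen[OF c[folded preW_def] V(1)] .
    then have "openin (top_of_set Ypts) (preW \<inter> (\<phi> \<circ> proj) -` V)" using preW_open openin_trans by blast
    moreover have "{y \<in> Ypts. proj y \<in> {P \<in> W. \<phi> P \<in> V}} = preW \<inter> (\<phi> \<circ> proj) -` V" by (auto simp: preW_def)
    ultimately have "openin Xtop {P \<in> W. \<phi> P \<in> V}" using WX by (intro openin_XtopI) auto
    then show "openin (subtopology Xtop W) {x \<in> topspace (subtopology Xtop W). \<phi> x \<in> U}"
      unfolding A openin_subtopology by (intro exI[of _ "{P \<in> W. \<phi> P \<in> V}"]) auto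
  qed
qed

text \<open>Data for a chart around p: in the disc of radius r about p the line h = 0 separates a
  part h > 0 of the region from a part h < 0 whose translate by \<tau> lies in the region, and each
  point of the line is glued exactly to its translate. If \<tau> = 0 the whole disc lies in the
  region; otherwise the disc and its translate are disjoint and contain no points of Y on the far
  side of the line. The chart is the inverse of z \<mapsto> [z] on the side h \<ge> 0 and z \<mapsto> [z + \<tau>]
  on the side h < 0.\<close>

definition chart_data :: "real^2 \<Rightarrow> real \<Rightarrow> real^2 \<Rightarrow> (real^2 \<Rightarrow> real) \<Rightarrow> bool" where
 "chart_data p r \<tau> h \<longleftrightarrow> 0 < r \<and> continuous_on UNIV h \<and>
   (\<forall>z\<in>ball p r. 0 < h z \<longrightarrow> z \<in> region) \<and>
   (\<forall>z\<in>ball p r. h z < 0 \<longrightarrow> z + \<tau> \<in> region) \<and>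
   (\<forall>z\<in>ball p r. h z = 0 \<longrightarrow> (z, z + \<tau>) \<in> grel) \<and>
   (\<forall>y\<in>Ypts \<inter> ball p r. h y < 0 \<longrightarrow> \<tau> = 0) \<and>
   (\<forall>y\<in>Ypts \<inter> ball (p + \<tau>) r. 0 < h (y - \<tau>) \<longrightarrow> \<tau> = 0) \<and>
   (\<tau> \<noteq> 0 \<longrightarrow> 2*r \<le> norm \<tau>) \<and>
   (\<tau> = 0 \<longrightarrow> ball p r \<subseteq> region) \<and>
   (\<forall>z\<in>ball p r. \<forall>y. \<tau> \<noteq> 0 \<longrightarrow> h z = 0 \<longrightarrow> (z, y) \<in> grel \<longrightarrow> y = z \<or> y = z + \<tau>)"

lemma chart_data_shrink:
  assumes "chart_data p r \<tau> h" "0 < r'" "r' \<le> r"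
  shows "chart_data p r' \<tau> h"
proof -
  have "ball p r' \<subseteq> ball p r" "ball (p+\<tau>) r' \<subseteq> ball (p+\<tau>) r" using assms(3) by auto
  then show ?thesis using assms unfolding chart_data_def by (smt (verit, best) IntE IntI subset_iff)
qed

definition side_lift :: "real^2 \<Rightarrow> (real^2 \<Rightarrow> real) \<Rightarrow> real^2 \<Rightarrow> real^2" where
  "side_lift \<tau> h z = (if 0 \<le> h z then z else z + \<tau>)"
definition chart_dom where "chart_dom p r \<tau> h = (\<lambda>z. proj (side_lift \<tau> h z)) ` ball p r"
definition chart_fun where "chart_fun p r \<tau> h = inv_into (ball p r) (\<lambda>z. proj (side_lift \<tau> h z))"

context
  fixes p r \<tau> h
  assumes ok: "chart_data p r \<tau> h"
begin

lemma chart_data_continuous: "continuous_on UNIV h" using ok by (simp add: chart_data_def)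

lemma chart_data_pos: "z \<in> ball p r \<Longrightarrow> 0 < h z \<Longrightarrow> z \<in> region" using ok by (simp add: chart_data_def)

lemma chart_data_neg: "z \<in> ball p r \<Longrightarrow> h z < 0 \<Longrightarrow> z + \<tau> \<in> region" using ok by (simp add: chart_data_def)

lemma chart_data_zero: "z \<in> ball p r \<Longrightarrow> h z = 0 \<Longrightarrow> (z, z + \<tau>) \<in> grel" using ok by (simp add: chart_data_def)

lemma chart_data_neg_Ypts: "y \<in> Ypts \<Longrightarrow> y \<in> ball p r \<Longrightarrow> h y < 0 \<Longrightarrow> \<tau> = 0" using ok unfolding chart_data_def by blast

lemma chart_data_pos_shifted_Ypts: "y \<in> Ypts \<Longrightarrow> y \<in> ball (p + \<tau>) r \<Longrightarrow> 0 < h (y - \<tau>) \<Longrightarrow> \<tau> = 0" using ok unfolding chart_data_def by blast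

lemma chart_data_shift_far: "\<tau> \<noteq> 0 \<Longrightarrow> 2*r \<le> norm \<tau>" using ok by (simp add: chart_data_def)

lemma chart_data_ball_region: "\<tau> = 0 \<Longrightarrow> ball p r \<subseteq> region" using ok by (simp add: chart_data_def)

lemma chart_data_zero_grel: "\<tau> \<noteq> 0 \<Longrightarrow> z \<in> ball p r \<Longrightarrow> h z = 0 \<Longrightarrow> (z, y) \<in> grel \<Longrightarrow> y = z \<or> y = z + \<tau>"
  using ok unfolding chart_data_def by blast

lemma chart_nonneg_Ypts: "z \<in> ball p r \<Longrightarrow> 0 \<le> h z \<Longrightarrow> z \<in> Ypts"
proof -
  assume a: "z \<in> ball p r" "0 \<le> h z"
  show ?thesis
  proof (cases "h z = 0")
    case True then show ?thesis using chart_data_zero[OF a(1)] grel_iff by blast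
  next
    case False then show ?thesis using chart_data_pos[OF a(1)] a(2) region_imp_Ypts by simp
  qed
qed

lemma chart_nonpos_shift_Ypts: "z \<in> ball p r \<Longrightarrow> h z \<le> 0 \<Longrightarrow> z + \<tau> \<in> Ypts"
proof -
  assume a: "z \<in> ball p r" "h z \<le> 0"
  show ?thesis
  proof (cases "h z = 0")
    case True then show ?thesis using chart_data_zero[OF a(1)] grel_iff by blast
  next
    case False then show ?thesis using chart_data_neg[OF a(1)] a(2) region_imp_Ypts by simp
  qed
qed

lemma side_lift_0: "side_lift 0 h z = z" by (simp add: side_lift_def)

lemma side_lift_Ypts: "z \<in> ball p r \<Longrightarrow> side_lift \<tau> h z \<in> Ypts"
  using chart_nonneg_Ypts chart_nonpos_shift_Ypts unfolding side_lift_def by auto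

lemma side_lift_not_region: "z \<in> ball p r \<Longrightarrow> side_lift \<tau> h z \<notin> region \<Longrightarrow> h z = 0"
proof (rule ccontr)
  assume a: "z \<in> ball p r" "side_lift \<tau> h z \<notin> region" "h z \<noteq> 0"
  show False
  proof (cases "0 < h z")
    case True then show False using a chart_data_pos by (simp add: side_lift_def)
  next
    case False then have "h z < 0" using a(3) by simp
    then show False using a chart_data_neg by (simp add: side_lift_def)
  qed
qed

lemma chart_shift_apart: "\<tau> \<noteq> 0 \<Longrightarrow> z \<in> ball p r \<Longrightarrow> w \<in> ball p r \<Longrightarrow> z \<noteq> w + \<tau>"
proof
  assume a: "\<tau> \<noteq> 0" "z \<in> ball p r" "w \<in> ball p r" "z = w + \<tau>"
  have "dist z w < 2*r" using a(2,3) dist_triangle_less_add[of z p r w r]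
    by (simp add: dist_commute)
  moreover have "dist z w = norm \<tau>" using a(4) by (simp add: dist_norm)
  ultimately show False using chart_data_shift_far a(1) by simp
qed

lemma side_lift_inj: "z \<in> ball p r \<Longrightarrow> w \<in> ball p r \<Longrightarrow> side_lift \<tau> h z = side_lift \<tau> h w \<Longrightarrow> z = w"
  using chart_shift_apart unfolding side_lift_def
  by (cases "\<tau> = 0") (auto split: if_splits)

lemma inj_on_proj_side_lift: "inj_on (\<lambda>z. proj (side_lift \<tau> h z)) (ball p r)"
proof (rule inj_onI)
  fix z w assume zw: "z \<in> ball p r" "w \<in> ball p r" "proj (side_lift \<tau> h z) = proj (side_lift \<tau> h w)"
  then have R: "(side_lift \<tau> h z, side_lift \<tau> h w) \<in> grel" using proj_eq_iff side_lift_Ypts by blast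
  show "z = w"
  proof (cases "side_lift \<tau> h z \<in> region \<or> side_lift \<tau> h w \<in> region")
    case True
    then have "side_lift \<tau> h z = side_lift \<tau> h w"
      using R grel_region equiv_grel by (metis sym_def equivE)
    then show ?thesis using side_lift_inj zw by blast
  next
    case False
    then have "\<tau> \<noteq> 0" using chart_data_ball_region zw side_lift_0 by (metis subsetD)
    have "h z = 0" "h w = 0" using False side_lift_not_region zw by blast+
    then have "(z, w) \<in> grel" using R by (simp add: side_lift_def)
    then have "w = z \<or> w = z + \<tau>" using chart_data_zero_grel \<open>\<tau> \<noteq> 0\<close> zw \<open>h z = 0\<close> by blast
    then show ?thesis using chart_shift_apart[OF \<open>\<tau> \<noteq> 0\<close> zw(2,1)] by auto
  qed
qed

lemma chart_fun_proj_side_lift: "z \<in> ball p r \<Longrightarrow> chart_fun p r \<tau> h (proj (side_lift \<tau> h z)) = z"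
  unfolding chart_fun_def using inv_into_f_f[OF inj_on_proj_side_lift] by blast

lemma side_lift_Ypts_ball: "y \<in> Ypts \<Longrightarrow> y \<in> ball p r \<Longrightarrow> side_lift \<tau> h y = y"
  using chart_data_neg_Ypts unfolding side_lift_def by fastforce

lemma proj_side_lift_shifted:
  assumes "y \<in> Ypts" "y \<in> ball (p + \<tau>) r"
  shows "y - \<tau> \<in> ball p r \<and> proj (side_lift \<tau> h (y - \<tau>)) = proj y"
proof -
  have b: "y - \<tau> \<in> ball p r" using assms(2) by (simp add: dist_norm algebra_simps mem_ball)
  consider "h (y - \<tau>) < 0" | "h (y - \<tau>) = 0" | "0 < h (y - \<tau>)" by fastforce
  then show ?thesis
  proof cases
    case 1 then show ?thesis using b by (simp add: side_lift_def)
  next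
    case 2 then show ?thesis using b chart_data_zero[OF b] proj_eq by (simp add: side_lift_def)
  next
    case 3 then have "\<tau> = 0" using chart_data_pos_shifted_Ypts assms by blast
    then show ?thesis using b by (simp add: side_lift_def)
  qed
qed

lemma chart_dom_preimage: "{y \<in> Ypts. proj y \<in> chart_dom p r \<tau> h} = Ypts \<inter> (ball p r \<union> ball (p + \<tau>) r)"
proof (intro set_eqI iffI)
  fix y assume "y \<in> {y \<in> Ypts. proj y \<in> chart_dom p r \<tau> h}"
  then obtain z where y: "y \<in> Ypts" and z: "z \<in> ball p r" "proj y = proj (side_lift \<tau> h z)"
    by (auto simp: chart_dom_def)
  then have R: "(side_lift \<tau> h z, y) \<in> grel" using proj_eq_iff side_lift_Ypts by metis
  show "y \<in> Ypts \<inter> (ball p r \<union> ball (p + \<tau>) r)"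
  proof (cases "side_lift \<tau> h z \<in> region")
    case True
    then have "y = side_lift \<tau> h z" using R grel_region by blast
    then show ?thesis using y z by (auto simp: side_lift_def dist_norm algebra_simps mem_ball)
  next
    case False
    then have "\<tau> \<noteq> 0" using chart_data_ball_region z side_lift_0 by (metis subsetD)
    have "h z = 0" using False side_lift_not_region z by blast
    then have "y = z \<or> y = z + \<tau>" using chart_data_zero_grel \<open>\<tau> \<noteq> 0\<close> z R by (simp add: side_lift_def)
    then show ?thesis using y z by (auto simp: dist_norm algebra_simps mem_ball)
  qed
next
  fix y assume y: "y \<in> Ypts \<inter> (ball p r \<union> ball (p + \<tau>) r)"
  then show "y \<in> {y \<in> Ypts. proj y \<in> chart_dom p r \<tau> h}"
  proof (cases "y \<in> ball p r")
    case True then show ?thesis using y side_lift_Ypts_ball[of y] unfolding chart_dom_def by (metis (mono_tags) IntD1 image_eqI mem_Collect_eq)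
  next
    case False
    then have "y \<in> ball (p + \<tau>) r" using y by blast
    then show ?thesis using y proj_side_lift_shifted[of y] unfolding chart_dom_def by (metis (mono_tags) IntD1 image_eqI mem_Collect_eq)
  qed
qed

lemma openin_chart_dom: "openin Xtop (chart_dom p r \<tau> h)"
proof (rule openin_XtopI)
  show "chart_dom p r \<tau> h \<subseteq> Xpts" unfolding chart_dom_def using side_lift_Ypts proj_in_Xpts by auto
  have "openin (top_of_set Ypts) (Ypts \<inter> (ball p r \<union> ball (p + \<tau>) r))" by (auto intro: openin_open_Int)
  then show "openin (top_of_set Ypts) {y \<in> Ypts. proj y \<in> chart_dom p r \<tau> h}" using chart_dom_preimage by simp
qed

lemma chart_fun_proj: "y \<in> Ypts \<Longrightarrow> y \<in> ball p r \<Longrightarrow> chart_fun p r \<tau> h (proj y) = y"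
  using chart_fun_proj_side_lift side_lift_Ypts_ball by metis

lemma chart_fun_proj_shifted: "y \<in> Ypts \<Longrightarrow> y \<in> ball (p + \<tau>) r \<Longrightarrow> chart_fun p r \<tau> h (proj y) = y - \<tau>"
  using chart_fun_proj_side_lift proj_side_lift_shifted by metis

lemma chart_balls_disjoint: "\<tau> \<noteq> 0 \<Longrightarrow> ball p r \<inter> ball (p + \<tau>) r = {}"
proof (rule ccontr)
  assume a: "\<tau> \<noteq> 0" "ball p r \<inter> ball (p + \<tau>) r \<noteq> {}"
  then obtain x where "dist p x < r" "dist (p + \<tau>) x < r" by auto
  then have "dist p (p + \<tau>) < 2*r" using dist_triangle_less_add[of p x r "p+\<tau>" r] by (simp add: dist_commute)
  then show False using chart_data_shift_far a(1) by (simp add: dist_norm)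
qed

lemma continuous_map_chart_fun: "continuous_map (subtopology Xtop (chart_dom p r \<tau> h)) (top_of_set (ball p r)) (chart_fun p r \<tau> h)"
proof (rule continuous_map_from_Xtop[OF openin_chart_dom])
  fix P assume "P \<in> chart_dom p r \<tau> h"
  then obtain z where "z \<in> ball p r" "P = proj (side_lift \<tau> h z)" unfolding chart_dom_def by blast
  then show "chart_fun p r \<tau> h P \<in> ball p r" using chart_fun_proj_side_lift by simp
next
  let ?S = "Ypts \<inter> ball p r" and ?T = "Ypts \<inter> ball (p + \<tau>) r"
  have eq: "(chart_fun p r \<tau> h \<circ> proj) y = (if y \<in> ball p r then y else y - \<tau>)" if "y \<in> ?S \<union> ?T" for y
    using that chart_fun_proj chart_fun_proj_shifted by auto
  have "continuous_on (?S \<union> ?T) (\<lambda>y. if y \<in> ball p r then y else y - \<tau>)"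
  proof (rule continuous_on_cases_local_open)
    show "openin (top_of_set (?S \<union> ?T)) ?S" "openin (top_of_set (?S \<union> ?T)) ?T"
      by (auto intro!: openin_open_Int simp: openin_open)
    show "continuous_on ?S (\<lambda>y. y)" "continuous_on ?T (\<lambda>y. y - \<tau>)" by (auto intro: continuous_intros)
    show "\<And>x. x \<in> ?S \<and> x \<notin> ball p r \<or> x \<in> ?T \<and> x \<in> ball p r \<Longrightarrow> x = x - \<tau>"
      using chart_balls_disjoint by (cases "\<tau> = 0") auto
  qed
  then show "continuous_on {y \<in> Ypts. proj y \<in> chart_dom p r \<tau> h} (chart_fun p r \<tau> h \<circ> proj)"
    unfolding chart_dom_preimage using eq by (auto intro: continuous_on_eq simp: Int_Un_distrib)
qed

lemma continuous_map_chart_inverse: "continuous_map (top_of_set (ball p r)) (subtopology Xtop (chart_dom p r \<tau> h)) (\<lambda>z. proj (side_lift \<tau> h z))"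
proof (rule continuous_map_into_subtopology)
  show "(\<lambda>z. proj (side_lift \<tau> h z)) \<in> topspace (top_of_set (ball p r)) \<rightarrow> chart_dom p r \<tau> h" by (auto simp: chart_dom_def)
  have eqf: "(\<lambda>z. proj (side_lift \<tau> h z)) = (\<lambda>z. if (\<lambda>_. 0) z \<le> h z then proj z else proj (z + \<tau>))"
    by (rule ext) (simp add: side_lift_def)
  have A: "{x. x \<in> topspace (top_of_set (ball p r)) \<and> 0 \<le> h x} \<subseteq> Ypts"
    using chart_nonneg_Ypts by auto
  have B: "(\<lambda>z. z + \<tau>) ` {x. x \<in> topspace (top_of_set (ball p r)) \<and> h x \<le> 0} \<subseteq> Ypts"
    using chart_nonpos_shift_Ypts by auto
  show "continuous_map (top_of_set (ball p r)) Xtop (\<lambda>z. proj (side_lift \<tau> h z))"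
    unfolding eqf
  proof (rule continuous_map_cases_le)
    show "continuous_map (top_of_set (ball p r)) euclideanreal (\<lambda>_. 0)" by simp
    show "continuous_map (top_of_set (ball p r)) euclideanreal h"
      using continuous_on_subset[OF chart_data_continuous] by simp
    show "continuous_map (subtopology (top_of_set (ball p r)) {x. x \<in> topspace (top_of_set (ball p r)) \<and> 0 \<le> h x}) Xtop proj"
    proof -
      have "continuous_map (subtopology (top_of_set (ball p r)) {x. x \<in> topspace (top_of_set (ball p r)) \<and> 0 \<le> h x}) (top_of_set Ypts) (\<lambda>z. z)"
        using A by (auto simp: continuous_map_in_subtopology subtopology_subtopology)
      then show ?thesis using continuous_map_compose[OF _ continuous_map_proj] by (simp add: o_def)
    qed
    show "continuous_map (subtopology (top_of_set (ball p r)) {x. x \<in> topspace (top_of_set (ball p r)) \<and> h x \<le> 0}) Xtop (\<lambda>z. proj (z + \<tau>))"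
    proof -
      have "continuous_map (subtopology (top_of_set (ball p r)) {x. x \<in> topspace (top_of_set (ball p r)) \<and> h x \<le> 0}) (top_of_set Ypts) (\<lambda>z. z + \<tau>)"
        using B by (auto simp: continuous_map_in_subtopology subtopology_subtopology intro!: continuous_intros)
      then show ?thesis using continuous_map_compose[OF _ continuous_map_proj] by (simp add: o_def)
    qed
    show "\<And>x. x \<in> topspace (top_of_set (ball p r)) \<Longrightarrow> 0 = h x \<Longrightarrow> proj x = proj (x + \<tau>)"
      using chart_data_zero proj_eq by simp
  qed
qed

lemma chart_fun_image: "chart_fun p r \<tau> h ` chart_dom p r \<tau> h = ball p r"
proof
  show "chart_fun p r \<tau> h ` chart_dom p r \<tau> h \<subseteq> ball p r"
  proof
    fix x assume "x \<in> chart_fun p r \<tau> h ` chart_dom p r \<tau> h"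
    then obtain z where "z \<in> ball p r" "x = chart_fun p r \<tau> h (proj (side_lift \<tau> h z))" unfolding chart_dom_def by blast
    then show "x \<in> ball p r" using chart_fun_proj_side_lift by simp
  qed
  show "ball p r \<subseteq> chart_fun p r \<tau> h ` chart_dom p r \<tau> h"
  proof
    fix z assume z: "z \<in> ball p r"
    then have "proj (side_lift \<tau> h z) \<in> chart_dom p r \<tau> h" unfolding chart_dom_def by blast
    then show "z \<in> chart_fun p r \<tau> h ` chart_dom p r \<tau> h" using chart_fun_proj_side_lift[OF z] by (metis image_eqI)
  qed
qed

lemma homeomorphic_map_chart_fun: "homeomorphic_map (subtopology Xtop (chart_dom p r \<tau> h)) (top_of_set (chart_fun p r \<tau> h ` chart_dom p r \<tau> h)) (chart_fun p r \<tau> h)"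
  unfolding homeomorphic_map_maps chart_fun_image
proof (intro exI[of _ "\<lambda>z. proj (side_lift \<tau> h z)"])
  have top_dom: "topspace (subtopology Xtop (chart_dom p r \<tau> h)) = chart_dom p r \<tau> h"
    using openin_subset[OF openin_chart_dom] by (auto simp: topspace_subtopology)
  show "homeomorphic_maps (subtopology Xtop (chart_dom p r \<tau> h)) (top_of_set (ball p r)) (chart_fun p r \<tau> h) (\<lambda>z. proj (side_lift \<tau> h z))"
    unfolding homeomorphic_maps_def
  proof (intro conjI continuous_map_chart_fun continuous_map_chart_inverse ballI)
    fix x assume "x \<in> topspace (subtopology Xtop (chart_dom p r \<tau> h))"
    then have "x \<in> chart_dom p r \<tau> h" using top_dom by simp
    then obtain z where "z \<in> ball p r" "x = proj (side_lift \<tau> h z)" unfolding chart_dom_def by blast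
    then show "proj (side_lift \<tau> h (chart_fun p r \<tau> h x)) = x" using chart_fun_proj_side_lift by simp
  next
    fix z assume "z \<in> topspace (top_of_set (ball p r))"
    then show "chart_fun p r \<tau> h (proj (side_lift \<tau> h z)) = z" using chart_fun_proj_side_lift by simp
  qed
qed

lemma chart_fun_translation_near_region:
  assumes x: "x \<in> region" "proj x \<in> chart_dom p r \<tau> h"
  shows "\<exists>d>0. \<forall>y \<in> ball x d. y \<in> region \<and> proj y \<in> chart_dom p r \<tau> h \<and>
           chart_fun p r \<tau> h (proj y) - y = chart_fun p r \<tau> h (proj x) - x"
proof -
  have "x \<in> ball p r \<union> ball (p + \<tau>) r" using chart_dom_preimage x region_imp_Ypts by blast
  then obtain B c where B: "open B" "x \<in> B" "B \<subseteq> ball p r \<union> ball (p + \<tau>) r"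
    and c: "\<And>y. y \<in> Ypts \<Longrightarrow> y \<in> B \<Longrightarrow> chart_fun p r \<tau> h (proj y) = y - c"
    using chart_fun_proj chart_fun_proj_shifted by (metis Un_iff diff_zero open_ball order_refl sup_ge1 sup_ge2)
  obtain d where d: "d > 0" "ball x d \<subseteq> region \<inter> B"
    using B x(1) open_region by (metis open_Int openE IntI)
  have "y \<in> region \<and> proj y \<in> chart_dom p r \<tau> h \<and>
      chart_fun p r \<tau> h (proj y) - y = chart_fun p r \<tau> h (proj x) - x" if "y \<in> ball x d" for y
  proof -
    have y: "y \<in> region" "y \<in> B" "y \<in> Ypts" using that d region_imp_Ypts by auto
    then have "proj y \<in> chart_dom p r \<tau> h" using chart_dom_preimage B(3) by blast
    moreover have "chart_fun p r \<tau> h (proj y) - y = chart_fun p r \<tau> h (proj x) - x"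
      using c[OF y(3,2)] c[OF region_imp_Ypts[OF x(1)] B(2)] by simp
    ultimately show ?thesis using y(1) by blast
  qed
  then show ?thesis using d(1) by blast
qed

lemma translation_chart_chart: "translation_chart lam (chart_dom p r \<tau> h) (chart_fun p r \<tau> h)"
  unfolding translation_chart_def ladder_region_eq
  using openin_chart_dom homeomorphic_map_chart_fun chart_fun_translation_near_region chart_fun_image by auto

end

end

section \<open>The hexagons\<close>

datatype side = AB | BC | CD | DE | EF | FA

lemma UNIV_side: "(UNIV :: side set) = {AB, BC, CD, DE, EF, FA}"
  using side.exhaust by auto

instance side :: finite
  by standard (simp add: UNIV_side)

lemma all_side_iff: "(\<forall>e. P e) \<longleftrightarrow> P AB \<and> P BC \<and> P CD \<and> P DE \<and> P EF \<and> P FA"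
  by (metis side.exhaust)

fun next_side :: "side \<Rightarrow> side" where
  "next_side AB = CD" | "next_side BC = DE" | "next_side CD = EF" | "next_side DE = FA" | "next_side EF = AB" | "next_side FA = BC"
fun prev_side :: "side \<Rightarrow> side" where
  "prev_side CD = AB" | "prev_side DE = BC" | "prev_side EF = CD" | "prev_side FA = DE" | "prev_side AB = EF" | "prev_side BC = FA"
fun opp_side :: "side \<Rightarrow> side" where
  "opp_side AB = DE" | "opp_side BC = EF" | "opp_side CD = FA" | "opp_side DE = AB" | "opp_side EF = BC" | "opp_side FA = CD"

lemma next_prev_side [simp]: "next_side (prev_side e) = e" by (cases e) auto

lemma prev_next_side [simp]: "prev_side (next_side e) = e" by (cases e) auto

context ladder_param begin

definition diag where "diag j = t j + t (Suc j)"
definition rot_offset where "rot_offset j = t j + t (j+1) + t (j+2)"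

text \<open>The hexagon H_j is cut out by the six inequalities side_fun e j > 0, its sides listed
  counterclockwise: AB and DE lie on the lines x + y = diag j and x + y = diag (j+1), BC and CD
  are the bottom and right side (edges of L), EF and FA the top and left side (edges of U).
  Side e of H_j is glued, by the translation side_shift e j, to side opp_side e of
  H_(side_nbr e j); the sides AB, CD and EF of H_0 are empty, which side_valid records.\<close>

definition side_fun :: "side \<Rightarrow> nat \<Rightarrow> real^2 \<Rightarrow> real" where
  "side_fun e j z = (case e of AB \<Rightarrow> z$1 + z$2 - diag j | BC \<Rightarrow> z$2 - t j | CD \<Rightarrow> t (j+2) - z$1
     | DE \<Rightarrow> diag (j+1) - z$1 - z$2 | EF \<Rightarrow> t (j+2) - z$2 | FA \<Rightarrow> z$1 - t j)"

definition side_shift :: "side \<Rightarrow> nat \<Rightarrow> real^2" where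
  "side_shift e j = (case e of AB \<Rightarrow> 0 | BC \<Rightarrow> vec2 0 (t (j+3) - t j) | CD \<Rightarrow> vec2 (t (j-1) - t (j+2)) 0
     | DE \<Rightarrow> 0 | EF \<Rightarrow> vec2 0 (t (j-1) - t (j+2)) | FA \<Rightarrow> vec2 (t (j+3) - t j) 0)"

definition side_nbr :: "side \<Rightarrow> nat \<Rightarrow> nat" where
  "side_nbr e j = (case e of AB \<Rightarrow> j - 1 | BC \<Rightarrow> j + 1 | CD \<Rightarrow> j - 1 | DE \<Rightarrow> j + 1 | EF \<Rightarrow> j - 1 | FA \<Rightarrow> j + 1)"

definition side_valid :: "side \<Rightarrow> nat \<Rightarrow> bool" where
  "side_valid e j \<longleftrightarrow> (e \<in> {AB, CD, EF} \<longrightarrow> 1 \<le> j)"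

definition hex :: "nat \<Rightarrow> (real^2) set" where "hex j = {z. \<forall>e. 0 < side_fun e j z}"
definition hex_side :: "side \<Rightarrow> nat \<Rightarrow> (real^2) set" where
  "hex_side e j = {z. side_fun e j z = 0 \<and> (\<forall>e'. e' \<noteq> e \<longrightarrow> 0 < side_fun e' j z)}"
definition hex_cl :: "nat \<Rightarrow> (real^2) set" where "hex_cl j = hex j \<union> (\<Union>e. hex_side e j)"

definition rot :: "nat \<Rightarrow> real^2 \<Rightarrow> real^2" where "rot j z = vec2 (rot_offset j - z$1 - z$2) (z$1)"

lemma side_fun_next_rot: "side_fun (next_side e) j (rot j z) = side_fun e j z"
  by (cases e) (simp_all add: side_fun_def rot_def diag_def rot_offset_def)

lemma side_fun_rot: "side_fun e j (rot j z) = side_fun (prev_side e) j z"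
  using side_fun_next_rot[of "prev_side e" j z] by simp

lemma rot_hex: assumes "z \<in> hex j" shows "rot j z \<in> hex j"
proof -
  have "0 < side_fun e j (rot j z)" for e
    using assms unfolding hex_def side_fun_rot[of e j z] by blast
  then show ?thesis unfolding hex_def by blast
qed

lemma rot_hex_side: assumes "z \<in> hex_side e j" shows "rot j z \<in> hex_side (next_side e) j"
proof -
  have "side_fun (next_side e) j (rot j z) = 0" using assms unfolding hex_side_def side_fun_next_rot by blast
  moreover have "0 < side_fun e' j (rot j z)" if "e' \<noteq> next_side e" for e'
  proof -
    have "prev_side e' \<noteq> e" using that by auto
    then show ?thesis using assms unfolding hex_side_def side_fun_rot[of e' j z] by blast
  qed
  ultimately show ?thesis unfolding hex_side_def by blast
qed

lemma rot_hex_cl: "z \<in> hex_cl j \<Longrightarrow> rot j z \<in> hex_cl j"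
  unfolding hex_cl_def using rot_hex rot_hex_side by blast

lemma rot_rot_rot: "rot j (rot j (rot j z)) = z"
  by (simp add: rot_def vec2_components[symmetric])

lemma rot_eq_Rmat: "rot j z = Rmat *v z + vec2 (rot_offset j) 0"
  by (simp add: rot_def Rmat_def vec_eq_iff forall_2 matrix_vector_mult_def sum_2 vec2_def)

lemma dist_rot_le: "dist (rot j z) (rot j w) \<le> 2 * dist z w"
proof -
  have "rot j z - rot j w = vec2 (-(z$1 - w$1) - (z$2 - w$2)) (z$1 - w$1)"
    by (simp add: rot_def)
  then have "dist (rot j z) (rot j w) = sqrt ((-(z$1 - w$1) - (z$2 - w$2))^2 + (z$1 - w$1)^2)"
    by (simp add: dist_norm norm_vec2)
  also have "\<dots> \<le> sqrt (4 * ((z$1 - w$1)^2 + (z$2 - w$2)^2))"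
    by (rule real_sqrt_le_mono) (smt (verit) zero_le_power2 power2_diff power2_sum)
  also have "\<dots> = 2 * sqrt ((z$1 - w$1)^2 + (z$2 - w$2)^2)"
    by (simp only: real_sqrt_mult real_sqrt_four)
  also have "\<dots> = 2 * dist z w"
    using dist_vec2[of "z$1" "z$2" "w$1" "w$2"] by (simp add: vec2_components[symmetric])
  finally show ?thesis .
qed

lemma side_fun_lipschitz: "\<bar>side_fun e j z - side_fun e j w\<bar> \<le> 2 * dist z w"
proof -
  have a: "\<bar>z$1 - w$1\<bar> \<le> dist z w" "\<bar>z$2 - w$2\<bar> \<le> dist z w"
    using component1_le_dist component2_le_dist by auto
  show ?thesis using a by (cases e) (auto simp: side_fun_def abs_le_iff)
qed

lemma continuous_side_fun: "continuous_on UNIV (side_fun e j)"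
  by (cases e) (auto simp: side_fun_def intro!: continuous_intros)

text \<open>The maps \<rho>_j are compatible with the side pairings: rotating a glued copy of a side
  gives the glued copy of the rotated side.\<close>

lemma rot_side_shift:
  assumes "side_valid e j"
  shows "rot (side_nbr e j) (z + side_shift e j) = rot j z + side_shift (next_side e) j"
proof (cases e)
  case AB
  then obtain i where i: "j = Suc i" using assms by (cases j) (auto simp: side_valid_def)
  then show ?thesis using AB by (simp add: rot_def side_shift_def side_nbr_def rot_offset_def)
next
  case BC then show ?thesis by (simp add: rot_def side_shift_def side_nbr_def rot_offset_def)
next
  case CD
  then obtain i where i: "j = Suc i" using assms by (cases j) (auto simp: side_valid_def)
  then show ?thesis using CD by (simp add: rot_def side_shift_def side_nbr_def rot_offset_def)
next
  case DE then show ?thesis by (simp add: rot_def side_shift_def side_nbr_def rot_offset_def)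
next
  case EF
  then obtain i where i: "j = Suc i" using assms by (cases j) (auto simp: side_valid_def)
  then show ?thesis using EF by (simp add: rot_def side_shift_def side_nbr_def rot_offset_def)
next
  case FA then show ?thesis by (simp add: rot_def side_shift_def side_nbr_def rot_offset_def)
qed

lemma side_fun_opp:
  assumes "side_valid e j"
  shows "side_fun (opp_side e) (side_nbr e j) (z + side_shift e j) = - side_fun e j z"
proof (cases e)
  case AB
  then obtain i where i: "j = Suc i" using assms by (cases j) (auto simp: side_valid_def)
  then show ?thesis using AB by (simp add: side_fun_def side_shift_def side_nbr_def diag_def)
next
  case CD
  then obtain i where i: "j = Suc i" using assms by (cases j) (auto simp: side_valid_def)
  then show ?thesis using CD by (simp add: side_fun_def side_shift_def side_nbr_def)
next
  case EF
  then obtain i where i: "j = Suc i" using assms by (cases j) (auto simp: side_valid_def)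
  then show ?thesis using EF by (simp add: side_fun_def side_shift_def side_nbr_def)
qed (simp_all add: side_fun_def side_shift_def side_nbr_def diag_def)

lemma mem_hex_side: "z \<in> hex_side e j \<longleftrightarrow> side_fun e j z = 0 \<and> (\<forall>e'. e' \<noteq> e \<longrightarrow> 0 < side_fun e' j z)"
  by (simp add: hex_side_def)

lemma mem_hex: "z \<in> hex j \<longleftrightarrow> t j < z$1 \<and> z$1 < t (j+2) \<and> t j < z$2 \<and> z$2 < t (j+2) \<and>
    diag j < z$1 + z$2 \<and> z$1 + z$2 < diag (j+1)"
  unfolding hex_def all_side_iff by (auto simp: side_fun_def)

lemma hex_side_BC: "hex_side BC j = L_horiz j"
  using t_steps[of j] unfolding hex_side_def all_side_iff set_eq_iff by (auto simp: side_fun_def L_horiz_def diag_def)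

lemma hex_side_CD: "hex_side CD j = L_vert j"
  using t_steps[of j] unfolding hex_side_def all_side_iff set_eq_iff by (auto simp: side_fun_def L_vert_def diag_def)

lemma hex_side_EF: "hex_side EF j = U_horiz j"
  using t_steps[of j] unfolding hex_side_def all_side_iff set_eq_iff by (auto simp: side_fun_def U_horiz_def diag_def)

lemma hex_side_FA: "hex_side FA j = U_vert j"
  using t_steps[of j] unfolding hex_side_def all_side_iff set_eq_iff by (auto simp: side_fun_def U_vert_def diag_def)

lemma hex_side_AB: "hex_side AB j = {z. z$1 + z$2 = diag j \<and> t j < z$1 \<and> z$1 < t (j+1)}"
  using t_steps[of j] unfolding hex_side_def all_side_iff set_eq_iff by (auto simp: side_fun_def diag_def)

lemma hex_side_DE: "hex_side DE j = hex_side AB (j+1)"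
  using t_steps[of j] t_steps[of "Suc j"] unfolding hex_side_AB unfolding hex_side_def all_side_iff set_eq_iff by (auto simp: side_fun_def diag_def)

lemma hex_side_valid: "z \<in> hex_side e j \<Longrightarrow> side_valid e j"
proof (rule ccontr)
  assume a: "z \<in> hex_side e j" "\<not> side_valid e j"
  then have j: "j = 0" "e \<in> {AB, CD, EF}" by (auto simp: side_valid_def)
  then show False using a(1) by (auto simp: hex_side_AB hex_side_CD hex_side_EF L_vert_def U_horiz_def)
qed

lemma hex_subset_square: "hex j \<subseteq> square j" by (auto simp: mem_hex mem_square)

lemma square_subset_region: "square j \<subseteq> region" by (auto simp: region_def)

lemma hex_subset_region: "hex j \<subseteq> region" using hex_subset_square square_subset_region by blast

lemma hex_side_AB_subset_square: "hex_side AB j \<subseteq> square j"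
  using t_steps[of j] by (auto simp: hex_side_AB mem_square diag_def)

lemma hex_side_AB_subset_region: "hex_side AB j \<subseteq> region" using hex_side_AB_subset_square square_subset_region by blast

lemma hex_side_DE_subset_region: "hex_side DE j \<subseteq> region" using hex_side_AB_subset_region hex_side_DE by blast

lemma hex_side_subset_Ypts: "hex_side e j \<subseteq> Ypts"
  using hex_side_AB_subset_region hex_side_DE_subset_region
  by (cases e) (auto simp: Ypts_def L_edges_def U_edges_def hex_side_BC hex_side_CD hex_side_EF hex_side_FA)

lemma hex_cl_subset_Ypts: "hex_cl j \<subseteq> Ypts"
  unfolding hex_cl_def using hex_subset_region region_imp_Ypts hex_side_subset_Ypts by blast

lemma hex_side_opp: assumes "z \<in> hex_side e j" shows "z + side_shift e j \<in> hex_side (opp_side e) (side_nbr e j)"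
proof (cases e)
  case AB
  then obtain i where i: "j = Suc i" using hex_side_valid[OF assms] by (cases j) (auto simp: side_valid_def)
  then show ?thesis using assms AB by (simp add: side_shift_def side_nbr_def hex_side_DE)
next
  case BC then show ?thesis using assms L_horiz_shift by (simp add: side_shift_def side_nbr_def hex_side_BC hex_side_EF shift_H_def)
next
  case CD
  then obtain i where i: "j = Suc i" using hex_side_valid[OF assms] by (cases j) (auto simp: side_valid_def)
  then show ?thesis using assms CD L_vert_shift[of j z] by (simp add: side_shift_def side_nbr_def hex_side_CD hex_side_FA shift_V_def)
next
  case DE then show ?thesis using assms by (simp add: side_shift_def side_nbr_def hex_side_DE)
next
  case EF
  then obtain i where i: "j = Suc i" using hex_side_valid[OF assms] by (cases j) (auto simp: side_valid_def)
  then show ?thesis using assms EF by (auto simp: side_shift_def side_nbr_def hex_side_EF hex_side_BC U_horiz_def L_horiz_def)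
next
  case FA then show ?thesis using assms by (auto simp: side_shift_def side_nbr_def hex_side_FA hex_side_CD U_vert_def L_vert_def)
qed

lemma hex_side_grel: assumes "z \<in> hex_side e j" shows "(z, z + side_shift e j) \<in> grel"
proof -
  have zY: "z \<in> Ypts" using assms hex_side_subset_Ypts by blast
  have z'Y: "z + side_shift e j \<in> Ypts" using hex_side_opp[OF assms] hex_side_subset_Ypts by blast
  have "z = z + side_shift e j \<or> glued z (z + side_shift e j) \<or> glued (z + side_shift e j) z"
  proof (cases e)
    case AB then show ?thesis by (simp add: side_shift_def)
  next
    case DE then show ?thesis by (simp add: side_shift_def)
  next
    case BC then show ?thesis using assms unfolding glued_def by (auto simp: side_shift_def hex_side_BC shift_H_def)
  next
    case CD
    then obtain i where i: "j = Suc i" using hex_side_valid[OF assms] by (cases j) (auto simp: side_valid_def)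
    then show ?thesis using assms CD unfolding glued_def by (auto simp: side_shift_def hex_side_CD shift_V_def)
  next
    case EF
    then obtain i where i: "j = Suc i" using hex_side_valid[OF assms] by (cases j) (auto simp: side_valid_def)
    have "z + side_shift e j \<in> L_horiz i" using hex_side_opp[OF assms] EF i by (simp add: side_nbr_def hex_side_BC)
    moreover have "z = (z + side_shift e j) + shift_H i" using EF i by (simp add: side_shift_def shift_H_def vec_eq_iff forall_2)
    ultimately show ?thesis unfolding glued_def by blast
  next
    case FA
    have "z + side_shift e j \<in> L_vert (j+1)" using hex_side_opp[OF assms] FA by (simp add: side_nbr_def hex_side_CD)
    moreover have "z = (z + side_shift e j) + shift_V (j+1)" using FA by (simp add: side_shift_def shift_V_def vec_eq_iff forall_2)
    ultimately show ?thesis unfolding glued_def by (metis le_add2)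
  qed
  then show ?thesis using zY z'Y grel_iff by blast
qed

lemma diag_less_Suc: "diag a < diag (Suc a)"
  using t_steps[of a] by (simp add: diag_def)

lemma diag_strict_mono: "a < b \<Longrightarrow> diag a < diag b"
proof (induction b)
  case 0 then show ?case by simp
next
  case (Suc b)
  then show ?case using diag_less_Suc[of b] by (cases "a = b") auto
qed

lemma diag_le_imp_le: "diag a \<le> diag b \<Longrightarrow> a \<le> b"
  using diag_strict_mono by (meson not_le order.strict_iff_not)

lemma side_fun_simps:
  "side_fun AB j z = z$1 + z$2 - diag j" "side_fun BC j z = z$2 - t j" "side_fun CD j z = t (j+2) - z$1"
  "side_fun DE j z = diag (j+1) - z$1 - z$2" "side_fun EF j z = t (j+2) - z$2" "side_fun FA j z = z$1 - t j"
  by (simp_all add: side_fun_def)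

lemma region_cover:
  assumes "z \<in> region" shows "\<exists>j. z \<in> hex_cl j"
proof -
  obtain i where "z \<in> square i" using assms by (auto simp: region_def)
  then have zi: "t i < z$1" "z$1 < t (i+2)" "t i < z$2" "z$2 < t (i+2)" by (auto simp: mem_square)
  have ti: "t i \<le> t (i+1)" "t (i+1) < t (i+2)" "t (i+2) < t (i+3)" using t_steps[of i] by auto
  consider "z$1 + z$2 < diag i" | "z$1 + z$2 = diag i" | "diag i < z$1 + z$2 \<and> z$1 + z$2 < diag (i+1)"
    | "z$1 + z$2 = diag (i+1)" | "diag (i+1) < z$1 + z$2" by linarith
  then show ?thesis
  proof cases
    case 1
    then obtain k where k: "i = Suc k" using zi t_nonneg[of i] by (cases i) (auto simp: diag_def)
    then have "z \<in> hex k" using zi 1 t_mono[of k i] by (auto simp: mem_hex diag_def)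
    then show ?thesis by (auto simp: hex_cl_def)
  next
    case 2
    then have "z \<in> hex_side AB i" unfolding mem_hex_side all_side_iff using zi diag_less_Suc[of i] ti
      by (auto simp: side_fun_simps diag_def)
    then show ?thesis by (auto simp: hex_cl_def)
  next
    case 3
    then have "z \<in> hex i" using zi by (simp add: mem_hex)
    then show ?thesis by (auto simp: hex_cl_def)
  next
    case 4
    then have "z \<in> hex_side DE i" unfolding mem_hex_side all_side_iff using zi diag_less_Suc[of i] ti
      by (auto simp: side_fun_simps diag_def)
    then show ?thesis by (auto simp: hex_cl_def)
  next
    case 5
    then have "z \<in> hex (Suc i)" using zi ti by (auto simp: mem_hex diag_def)
    then show ?thesis by (auto simp: hex_cl_def)
  qed
qed

lemma Ypts_cover:
  assumes "z \<in> Ypts" shows "\<exists>j. z \<in> hex_cl j"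
proof -
  consider "z \<in> region" | j where "z \<in> hex_side BC j \<or> z \<in> hex_side CD j \<or> z \<in> hex_side EF j \<or> z \<in> hex_side FA j"
    using assms by (auto simp: Ypts_def L_edges_def U_edges_def hex_side_BC hex_side_CD hex_side_EF hex_side_FA)
  then show ?thesis by cases (use region_cover in \<open>auto simp: hex_cl_def\<close>)
qed

lemma hex_cl_side_fun_nonneg: "z \<in> hex_cl j \<Longrightarrow> 0 \<le> side_fun e j z"
  unfolding hex_cl_def hex_def hex_side_def by (cases "e") (auto, (metis less_eq_real_def)+)

lemma hex_cl_overlap:
  assumes "z \<in> hex_cl j" "z \<in> hex_cl k" "j < k"
  shows "k = Suc j \<and> z \<in> hex_side DE j"
proof -
  have a: "0 \<le> side_fun DE j z" "0 \<le> side_fun AB k z" using hex_cl_side_fun_nonneg assms by blast+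
  then have "diag k \<le> diag (j+1)" by (simp add: side_fun_simps)
  then have k: "k = Suc j" using diag_le_imp_le assms(3) by fastforce
  then have h0: "side_fun DE j z = 0" using a by (simp add: side_fun_simps)
  have "z \<notin> hex j"
  proof
    assume "z \<in> hex j"
    then have "0 < side_fun DE j z" unfolding hex_def by blast
    then show False using h0 by simp
  qed
  then obtain e where e: "z \<in> hex_side e j" using assms(1) by (auto simp: hex_cl_def)
  have "e = DE"
  proof (rule ccontr)
    assume "e \<noteq> DE"
    then have "DE \<noteq> e" by simp
    then have "0 < side_fun DE j z" using e unfolding hex_side_def by blast
    then show False using h0 by simp
  qed
  then show ?thesis using e k by simp
qed

definition is_edge :: "side \<Rightarrow> bool" where "is_edge e \<longleftrightarrow> e \<in> {BC, CD, EF, FA}"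

lemma side_shift_eq_0_iff:
  assumes "side_valid e j" shows "side_shift e j = 0 \<longleftrightarrow> \<not> is_edge e"
proof (cases e)
  case BC then show ?thesis using t_steps[of j] t_steps[of "Suc j"] t_mono[of j "Suc j"]
    by (auto simp: side_shift_def zero_vec2 is_edge_def)
next
  case CD
  then obtain i where "j = Suc i" using assms by (cases j) (auto simp: side_valid_def)
  then show ?thesis using CD t_steps[of i] t_steps[of "Suc i"] by (auto simp: side_shift_def zero_vec2 is_edge_def)
next
  case EF
  then obtain i where "j = Suc i" using assms by (cases j) (auto simp: side_valid_def)
  then show ?thesis using EF t_steps[of i] t_steps[of "Suc i"] by (auto simp: side_shift_def zero_vec2 is_edge_def)
next
  case FA then show ?thesis using t_steps[of j] t_steps[of "Suc j"] t_mono[of j "Suc j"]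
    by (auto simp: side_shift_def zero_vec2 is_edge_def)
qed (simp_all add: side_shift_def is_edge_def)

lemma Ypts_subset_cl_squares: "Ypts \<subseteq> cl_squares"
  using region_subset_cl_squares L_edges_subset_Lpath U_edges_subset_Upath
    Lpath_subset_cl_squares Upath_subset_cl_squares by (auto simp: Ypts_def)

lemma Ypts_near_L_horiz:
  assumes "p \<in> L_horiz j"
  shows "\<exists>\<rho>>0. \<forall>y\<in>Ypts \<inter> ball p \<rho>. t j \<le> y$2"
proof -
  define \<rho> where "\<rho> = min (p$1 - t (j+1)) (t (j+2) - p$1)"
  have pos: "\<rho> > 0" using assms by (auto simp: \<rho>_def L_horiz_def)
  have "t j \<le> y$2" if y: "y \<in> Ypts" "y \<in> ball p \<rho>" for y
  proof -
    have "\<bar>y$1 - p$1\<bar> < \<rho>" using y(2) component1_le_dist[of y p] by (simp add: dist_commute mem_ball)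
    then have y1: "t (j+1) < y$1" "y$1 < t (j+2)" by (auto simp: \<rho>_def)
    obtain i where i: "y \<in> cl_square i" using y(1) Ypts_subset_cl_squares by (auto simp: cl_squares_def)
    then have "t i < t (j+2)" "t (j+1) < t (i+2)" using y1 by (auto simp: mem_cl_square)
    then have "i < j + 2" "j + 1 < i + 2" using t_less_imp_less by blast+
    then have "j \<le> i" by simp
    then show ?thesis using i t_mono[of j i] by (auto simp: mem_cl_square)
  qed
  then show ?thesis using pos by blast
qed

lemma Ypts_near_L_vert:
  assumes "p \<in> L_vert j"
  shows "\<exists>\<rho>>0. \<forall>y\<in>Ypts \<inter> ball p \<rho>. y$1 \<le> t (j+2)"
proof -
  define \<rho> where "\<rho> = min (p$2 - t j) (t (j+1) - p$2)"
  have pos: "\<rho> > 0" using assms by (auto simp: \<rho>_def L_vert_def)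
  have "y$1 \<le> t (j+2)" if y: "y \<in> Ypts" "y \<in> ball p \<rho>" for y
  proof -
    have "\<bar>y$2 - p$2\<bar> < \<rho>" using y(2) component2_le_dist[of y p] by (simp add: dist_commute mem_ball)
    then have y2: "t j < y$2" "y$2 < t (j+1)" by (auto simp: \<rho>_def)
    obtain i where i: "y \<in> cl_square i" using y(1) Ypts_subset_cl_squares by (auto simp: cl_squares_def)
    then have "t i < t (j+1)" using y2 by (auto simp: mem_cl_square)
    then have "i < j + 1" using t_less_imp_less by blast
    then have "i + 2 \<le> j + 2" by simp
    then show ?thesis using i t_mono[of "i+2" "j+2"] by (auto simp: mem_cl_square)
  qed
  then show ?thesis using pos by blast
qed

lemma Ypts_near_edge:
  assumes "is_edge e" "p \<in> hex_side e j"
  shows "\<exists>\<rho>>0. \<forall>y\<in>Ypts \<inter> ball p \<rho>. 0 \<le> side_fun e j y"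
proof -
  consider "e = BC" | "e = CD" | "e = EF" | "e = FA" using assms(1) by (auto simp: is_edge_def)
  then show ?thesis
  proof cases
    case 1 then show ?thesis using Ypts_near_L_horiz[of p j] assms(2) by (auto simp: hex_side_BC side_fun_simps)
  next
    case 2 then show ?thesis using Ypts_near_L_vert[of p j] assms(2) by (auto simp: hex_side_CD side_fun_simps)
  next
    case 3
    then have "swap_xy p \<in> L_vert j" using assms(2) by (simp add: hex_side_EF U_horiz_swap mem_swap_xy_image)
    then obtain \<rho> where \<rho>: "\<rho> > 0" "\<forall>y\<in>Ypts \<inter> ball (swap_xy p) \<rho>. y$1 \<le> t (j+2)" using Ypts_near_L_vert by blast
    have "\<forall>y\<in>Ypts \<inter> ball p \<rho>. 0 \<le> side_fun e j y"
    proof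
      fix y assume "y \<in> Ypts \<inter> ball p \<rho>"
      then have "swap_xy y \<in> Ypts \<inter> ball (swap_xy p) \<rho>" by (simp add: swap_xy_mem_Ypts mem_ball_swap_xy[symmetric])
      then have "(swap_xy y)$1 \<le> t (j+2)" using \<rho>(2) by blast
      then show "0 \<le> side_fun e j y" using 3 by (simp add: side_fun_simps)
    qed
    then show ?thesis using \<rho>(1) by blast
  next
    case 4
    then have "swap_xy p \<in> L_horiz j" using assms(2) by (simp add: hex_side_FA U_vert_swap mem_swap_xy_image)
    then obtain \<rho> where \<rho>: "\<rho> > 0" "\<forall>y\<in>Ypts \<inter> ball (swap_xy p) \<rho>. t j \<le> y$2" using Ypts_near_L_horiz by blast
    have "\<forall>y\<in>Ypts \<inter> ball p \<rho>. 0 \<le> side_fun e j y"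
    proof
      fix y assume "y \<in> Ypts \<inter> ball p \<rho>"
      then have "swap_xy y \<in> Ypts \<inter> ball (swap_xy p) \<rho>" by (simp add: swap_xy_mem_Ypts mem_ball_swap_xy[symmetric])
      then have "t j \<le> (swap_xy y)$2" using \<rho>(2) by blast
      then show "0 \<le> side_fun e j y" using 4 by (simp add: side_fun_simps)
    qed
    then show ?thesis using \<rho>(1) by blast
  qed
qed

lemma side_fun_pos_near:
  assumes "\<forall>e\<in>S. 0 < side_fun e j p"
  shows "\<exists>r>0. \<forall>z\<in>ball p r. \<forall>e\<in>S. 0 < side_fun e j z"
proof (cases "S = {}")
  case True then show ?thesis by (intro exI[of _ 1]) auto
next
  case False
  define M where "M = Min ((\<lambda>e. side_fun e j p) ` S)"
  have fin: "finite ((\<lambda>e. side_fun e j p) ` S)" by simp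
  have M: "0 < M" unfolding M_def using assms False fin by (subst Min_gr_iff) auto
  have Mle: "M \<le> side_fun e j p" if "e \<in> S" for e unfolding M_def using fin that by simp
  show ?thesis
  proof (intro exI[of _ "M/2"] conjI ballI)
    show "0 < M/2" using M by simp
    fix z e assume z: "z \<in> ball p (M/2)" and e: "e \<in> S"
    have "\<bar>side_fun e j z - side_fun e j p\<bar> \<le> 2 * dist z p" by (rule side_fun_lipschitz)
    moreover have "dist z p < M/2" using z by (simp add: dist_commute mem_ball)
    ultimately show "0 < side_fun e j z" using Mle[OF e] by linarith
  qed
qed

end

context ladder_param begin

lemma hex_side_nbhd:
  assumes p: "p \<in> hex_side e j"
  obtains r where "r > 0"
    "\<And>z. z \<in> ball p r \<Longrightarrow> 0 < side_fun e j z \<Longrightarrow> z \<in> hex j"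
    "\<And>z. z \<in> ball p r \<Longrightarrow> side_fun e j z = 0 \<Longrightarrow> z \<in> hex_side e j"
    "\<And>z. z \<in> ball p r \<Longrightarrow> side_fun e j z < 0 \<Longrightarrow> z + side_shift e j \<in> hex (side_nbr e j)"
proof -
  let ?\<tau> = "side_shift e j" and ?i = "side_nbr e j" and ?e = "opp_side e"
  have v: "side_valid e j" using hex_side_valid p by blast
  obtain r1 where r1: "r1 > 0" "\<forall>z\<in>ball p r1. \<forall>e'\<in>{e'. e' \<noteq> e}. 0 < side_fun e' j z"
    using side_fun_pos_near[of "{e'. e' \<noteq> e}" j p] p by (auto simp: hex_side_def)
  obtain r2 where r2: "r2 > 0" "\<forall>z\<in>ball (p + ?\<tau>) r2. \<forall>e'\<in>{e'. e' \<noteq> ?e}. 0 < side_fun e' ?i z"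
    using side_fun_pos_near[of "{e'. e' \<noteq> ?e}" ?i "p + ?\<tau>"] hex_side_opp[OF p]
    by (auto simp: hex_side_def)
  show ?thesis
  proof (rule that[of "min r1 r2"])
    show "0 < min r1 r2" using r1 r2 by simp
  next
    fix z assume z: "z \<in> ball p (min r1 r2)"
    then have others: "0 < side_fun e' j z" if "e' \<noteq> e" for e' using r1 that by auto
    show "z \<in> hex j" if "0 < side_fun e j z"
    proof -
      have "0 < side_fun e' j z" for e' using others[of e'] that by (cases "e' = e") auto
      then show ?thesis by (simp add: hex_def)
    qed
    show "z \<in> hex_side e j" if "side_fun e j z = 0"
      using others that unfolding hex_side_def by blast
    have "z + ?\<tau> \<in> ball (p + ?\<tau>) r2" using z by (simp add: mem_ball dist_norm)
    then have others': "0 < side_fun e' ?i (z + ?\<tau>)" if "e' \<noteq> ?e" for e' using r2 that by auto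
    show "z + ?\<tau> \<in> hex ?i" if "side_fun e j z < 0"
    proof -
      have "0 < side_fun e' ?i (z + ?\<tau>)" for e'
        using others'[of e'] that side_fun_opp[OF v, of z] by (cases "e' = ?e") auto
      then show ?thesis by (simp add: hex_def)
    qed
  qed
qed

lemma edge_side_Ypts_nbhd:
  assumes e: "is_edge e" and p: "p \<in> hex_side e j"
  obtains \<rho> where "\<rho> > 0"
    "\<And>y. y \<in> Ypts \<Longrightarrow> y \<in> ball p \<rho> \<Longrightarrow> 0 \<le> side_fun e j y"
    "\<And>y. y \<in> Ypts \<Longrightarrow> y \<in> ball (p + side_shift e j) \<rho> \<Longrightarrow> side_fun e j (y - side_shift e j) \<le> 0"
proof -
  let ?\<tau> = "side_shift e j"
  have v: "side_valid e j" using hex_side_valid p by blast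
  have "is_edge (opp_side e)" using e by (cases e) (auto simp: is_edge_def)
  obtain \<rho>1 where \<rho>1: "\<rho>1 > 0" "\<forall>y\<in>Ypts \<inter> ball p \<rho>1. 0 \<le> side_fun e j y"
    using Ypts_near_edge[OF e p] by blast
  obtain \<rho>2 where \<rho>2: "\<rho>2 > 0" "\<forall>y\<in>Ypts \<inter> ball (p + ?\<tau>) \<rho>2. 0 \<le> side_fun (opp_side e) (side_nbr e j) y"
    using Ypts_near_edge[OF \<open>is_edge (opp_side e)\<close> hex_side_opp[OF p]] by blast
  show ?thesis
  proof (rule that[of "min \<rho>1 \<rho>2"])
    show "0 < min \<rho>1 \<rho>2" using \<rho>1 \<rho>2 by simp
    show "0 \<le> side_fun e j y" if "y \<in> Ypts" "y \<in> ball p (min \<rho>1 \<rho>2)" for y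
      using \<rho>1 that by auto
    show "side_fun e j (y - ?\<tau>) \<le> 0" if "y \<in> Ypts" "y \<in> ball (p + ?\<tau>) (min \<rho>1 \<rho>2)" for y
    proof -
      have "0 \<le> side_fun (opp_side e) (side_nbr e j) y" using \<rho>2(2) that by auto
      then show ?thesis using side_fun_opp[OF v, of "y - ?\<tau>"] by simp
    qed
  qed
qed

lemma side_chart_data:
  assumes p: "p \<in> hex_side e j" and r: "0 < r"
    and pos: "\<And>z. z \<in> ball p r \<Longrightarrow> 0 < side_fun e j z \<Longrightarrow> z \<in> hex j"
    and zero: "\<And>z. z \<in> ball p r \<Longrightarrow> side_fun e j z = 0 \<Longrightarrow> z \<in> hex_side e j"
    and neg: "\<And>z. z \<in> ball p r \<Longrightarrow> side_fun e j z < 0 \<Longrightarrow> z + side_shift e j \<in> hex (side_nbr e j)"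
    and edge: "is_edge e \<Longrightarrow> 2 * r \<le> norm (side_shift e j)
       \<and> (\<forall>y\<in>Ypts \<inter> ball p r. 0 \<le> side_fun e j y)
       \<and> (\<forall>y\<in>Ypts \<inter> ball (p + side_shift e j) r. side_fun e j (y - side_shift e j) \<le> 0)"
  shows "chart_data p r (side_shift e j) (side_fun e j)"
proof -
  let ?\<tau> = "side_shift e j"
  have edge_iff: "is_edge e \<longleftrightarrow> ?\<tau> \<noteq> 0"
    using side_shift_eq_0_iff[OF hex_side_valid[OF p]] by blast
  show ?thesis
    unfolding chart_data_def
  proof (intro conjI ballI impI allI r continuous_side_fun)
    fix z assume z: "z \<in> ball p r"
    show "z \<in> region" if "0 < side_fun e j z" using pos[OF z that] hex_subset_region by blast
    show "z + ?\<tau> \<in> region" if "side_fun e j z < 0" using neg[OF z that] hex_subset_region by blast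
    show zg: "(z, z + ?\<tau>) \<in> grel" if "side_fun e j z = 0" using zero[OF z that] hex_side_grel by blast
    show "y = z \<or> y = z + ?\<tau>" if "?\<tau> \<noteq> 0" "side_fun e j z = 0" "(z, y) \<in> grel" for y
      using grel_two[OF that(3) zg[OF that(2)]] that(1) by auto
  next
    show "?\<tau> = 0" if "y \<in> Ypts \<inter> ball p r" "side_fun e j y < 0" for y
    proof (rule ccontr)
      assume "?\<tau> \<noteq> 0"
      then have "0 \<le> side_fun e j y" using edge_iff edge that(1) by blast
      then show False using that(2) by simp
    qed
    show "?\<tau> = 0" if "y \<in> Ypts \<inter> ball (p + ?\<tau>) r" "0 < side_fun e j (y - ?\<tau>)" for y
    proof (rule ccontr)
      assume "?\<tau> \<noteq> 0"
      then have "side_fun e j (y - ?\<tau>) \<le> 0" using edge_iff edge that(1) by blast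
      then show False using that(2) by simp
    qed
    show "2 * r \<le> norm ?\<tau>" if "?\<tau> \<noteq> 0" using edge_iff edge that by blast
    show "ball p r \<subseteq> region" if "?\<tau> = 0"
    proof
      fix z assume z: "z \<in> ball p r"
      have "hex_side e j \<subseteq> region"
        using edge_iff that hex_side_AB_subset_region hex_side_DE_subset_region
        by (cases e) (auto simp: is_edge_def)
      then show "z \<in> region"
        using pos[OF z] zero[OF z] neg[OF z] that hex_subset_region
        by (cases "side_fun e j z" "0 :: real" rule: linorder_cases) auto
    qed
  qed
qed

lemma side_chart_radius:
  assumes p: "p \<in> hex_side e j" and r0: "0 < r0"
  obtains r where "0 < r" "r \<le> r0" "is_edge e \<Longrightarrow> 2 * r \<le> norm (side_shift e j)
       \<and> (\<forall>y\<in>Ypts \<inter> ball p r. 0 \<le> side_fun e j y)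
       \<and> (\<forall>y\<in>Ypts \<inter> ball (p + side_shift e j) r. side_fun e j (y - side_shift e j) \<le> 0)"
proof (cases "is_edge e")
  case True
  obtain \<rho> where \<rho>: "\<rho> > 0"
    "\<And>y. y \<in> Ypts \<Longrightarrow> y \<in> ball p \<rho> \<Longrightarrow> 0 \<le> side_fun e j y"
    "\<And>y. y \<in> Ypts \<Longrightarrow> y \<in> ball (p + side_shift e j) \<rho> \<Longrightarrow> side_fun e j (y - side_shift e j) \<le> 0"
    using edge_side_Ypts_nbhd[OF True p] by blast
  let ?r = "min r0 (min \<rho> (norm (side_shift e j) / 2))"
  have "side_shift e j \<noteq> 0" using side_shift_eq_0_iff[OF hex_side_valid[OF p]] True by blast
  then have "0 < ?r" using r0 \<rho>(1) by simp
  moreover have "ball p ?r \<subseteq> ball p \<rho>" "ball (p + side_shift e j) ?r \<subseteq> ball (p + side_shift e j) \<rho>"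
    by (simp_all add: subset_ball)
  ultimately show ?thesis using that[of ?r] \<rho>(2,3) by (simp add: subset_iff)
next
  case False
  then show ?thesis using that[of r0] r0 by simp
qed

lemma hex_side_chart:
  assumes p: "p \<in> hex_side e j"
  obtains r where "r > 0" "chart_data p r (side_shift e j) (side_fun e j)"
    "\<And>z. z \<in> ball p r \<Longrightarrow> 0 \<le> side_fun e j z \<Longrightarrow> z \<in> hex_cl j"
    "\<And>z. z \<in> ball p r \<Longrightarrow> side_fun e j z < 0 \<Longrightarrow> z + side_shift e j \<in> hex (side_nbr e j)"
proof -
  obtain r0 where r0: "r0 > 0"
    "\<And>z. z \<in> ball p r0 \<Longrightarrow> 0 < side_fun e j z \<Longrightarrow> z \<in> hex j"
    "\<And>z. z \<in> ball p r0 \<Longrightarrow> side_fun e j z = 0 \<Longrightarrow> z \<in> hex_side e j"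
    "\<And>z. z \<in> ball p r0 \<Longrightarrow> side_fun e j z < 0 \<Longrightarrow> z + side_shift e j \<in> hex (side_nbr e j)"
    using hex_side_nbhd[OF p] by blast
  obtain r where r: "0 < r" "r \<le> r0" and edge: "is_edge e \<Longrightarrow> 2 * r \<le> norm (side_shift e j)
       \<and> (\<forall>y\<in>Ypts \<inter> ball p r. 0 \<le> side_fun e j y)
       \<and> (\<forall>y\<in>Ypts \<inter> ball (p + side_shift e j) r. side_fun e j (y - side_shift e j) \<le> 0)"
    using side_chart_radius[OF p r0(1)] by blast
  have sub: "ball p r \<subseteq> ball p r0" using r(2) by auto
  show ?thesis
  proof (rule that[OF r(1)])
    show "chart_data p r (side_shift e j) (side_fun e j)"
      using side_chart_data[OF p r(1) _ _ _ edge] r0 sub by blast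
    show "z \<in> hex_cl j" if "z \<in> ball p r" "0 \<le> side_fun e j z" for z
    proof (cases "side_fun e j z = 0")
      case True
      then have "z \<in> hex_side e j" using r0(3) sub that(1) by blast
      then show ?thesis by (auto simp: hex_cl_def)
    next
      case False
      then have "z \<in> hex j" using r0(2) sub that by force
      then show ?thesis by (simp add: hex_cl_def)
    qed
    show "z + side_shift e j \<in> hex (side_nbr e j)" if "z \<in> ball p r" "side_fun e j z < 0" for z
      using r0(4) sub that by blast
  qed
qed

lemma hex_chart:
  assumes p: "p \<in> hex j"
  shows "\<exists>r>0. chart_data p r 0 (\<lambda>_. 1) \<and> ball p r \<subseteq> hex j"
proof -
  obtain r where r: "r > 0" "\<forall>z\<in>ball p r. \<forall>e\<in>UNIV. 0 < side_fun e j z"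
    using side_fun_pos_near[of UNIV j p] p by (auto simp: hex_def)
  have b: "ball p r \<subseteq> hex j" using r by (auto simp: hex_def)
  have "chart_data p r 0 (\<lambda>_. 1)"
    unfolding chart_data_def using r(1) b hex_subset_region by auto
  then show ?thesis using r(1) b by blast
qed

section \<open>The order three map of the surface\<close>

definition rot_rep :: "real^2 \<Rightarrow> real^2" where "rot_rep y = rot (SOME j. y \<in> hex_cl j) y"

lemma proj_rot_across_side: "y \<in> hex_side e j \<Longrightarrow> proj (rot (side_nbr e j) (y + side_shift e j)) = proj (rot j y)"
proof -
  assume y: "y \<in> hex_side e j"
  have "rot (side_nbr e j) (y + side_shift e j) = rot j y + side_shift (next_side e) j" using rot_side_shift hex_side_valid[OF y] by blast
  moreover have "rot j y \<in> hex_side (next_side e) j" using rot_hex_side[OF y] .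
  then have "(rot j y, rot j y + side_shift (next_side e) j) \<in> grel" by (rule hex_side_grel)
  ultimately show ?thesis using proj_eq by metis
qed

lemma proj_rot_rep: assumes "y \<in> hex_cl j" shows "proj (rot_rep y) = proj (rot j y)"
proof -
  define k where "k = (SOME j. y \<in> hex_cl j)"
  have k: "y \<in> hex_cl k" unfolding k_def using assms by (rule someI)
  have cut: "proj (rot a y) = proj (rot (Suc a) y)" if "y \<in> hex_side DE a" for a
  proof -
    have "y \<in> hex_side AB (Suc a)" using that hex_side_DE by simp
    then show ?thesis using proj_rot_across_side[of y AB "Suc a"] by (simp add: side_shift_def side_nbr_def)
  qed
  consider "k = j" | "j < k" | "k < j" by linarith
  then show ?thesis
  proof cases
    case 1 then show ?thesis by (simp add: rot_rep_def k_def[symmetric])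
  next
    case 2 then show ?thesis using hex_cl_overlap[OF assms k] cut by (simp add: rot_rep_def k_def[symmetric])
  next
    case 3 then show ?thesis using hex_cl_overlap[OF k assms] cut by (simp add: rot_rep_def k_def[symmetric])
  qed
qed

lemma rot_rep_Ypts: "y \<in> Ypts \<Longrightarrow> rot_rep y \<in> Ypts"
proof -
  assume "y \<in> Ypts"
  then obtain j where j: "y \<in> hex_cl j" using Ypts_cover by blast
  define k where "k = (SOME j. y \<in> hex_cl j)"
  have k: "y \<in> hex_cl k" unfolding k_def using j by (rule someI)
  then show ?thesis using rot_hex_cl hex_cl_subset_Ypts by (auto simp: rot_rep_def k_def[symmetric])
qed

lemma proj_rot_rep_side_shift: assumes "y \<in> hex_side e j" shows "proj (rot_rep (y + side_shift e j)) = proj (rot_rep y)"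
proof -
  have y1: "y \<in> hex_cl j" using assms by (auto simp: hex_cl_def)
  have y2: "y + side_shift e j \<in> hex_cl (side_nbr e j)" using hex_side_opp[OF assms] by (auto simp: hex_cl_def)
  show ?thesis using proj_rot_rep[OF y1] proj_rot_rep[OF y2] proj_rot_across_side[OF assms] by simp
qed

lemma proj_rot_rep_grel: assumes "(y, y') \<in> grel" shows "proj (rot_rep y) = proj (rot_rep y')"
proof -
  have gl: "proj (rot_rep p) = proj (rot_rep q)" if "glued p q" for p q
  proof -
    from that consider j where "p \<in> L_horiz j" "q = p + shift_H j" | j where "1 \<le> j" "p \<in> L_vert j" "q = p + shift_V j"
      unfolding glued_def by blast
    then show ?thesis
    proof cases
      case (1 j)
      then have "p \<in> hex_side BC j" "q = p + side_shift BC j" by (simp_all add: hex_side_BC side_shift_def shift_H_def)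
      then show ?thesis using proj_rot_rep_side_shift by metis
    next
      case (2 j)
      then have "p \<in> hex_side CD j" "q = p + side_shift CD j" by (simp_all add: hex_side_CD side_shift_def shift_V_def)
      then show ?thesis using proj_rot_rep_side_shift by metis
    qed
  qed
  show ?thesis using assms grel_iff gl by metis
qed

definition rotX :: "(real^2) set \<Rightarrow> (real^2) set" where "rotX P = proj (rot_rep (SOME y. y \<in> P))"

lemma mem_proj_self: "y \<in> Ypts \<Longrightarrow> y \<in> proj y"
  using grel_iff by (auto simp: ladder_proj_def)

lemma rotX_proj: assumes "y \<in> Ypts" shows "rotX (proj y) = proj (rot_rep y)"
proof -
  define y' where "y' = (SOME y'. y' \<in> proj y)"
  have "y' \<in> proj y" unfolding y'_def using mem_proj_self[OF assms] by (rule someI)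
  then have "(y, y') \<in> grel" by (simp add: ladder_proj_def)
  then show ?thesis using proj_rot_rep_grel by (simp add: rotX_def y'_def)
qed

lemma rotX_proj_hex_cl: "y \<in> hex_cl j \<Longrightarrow> rotX (proj y) = proj (rot j y)"
  using rotX_proj proj_rot_rep hex_cl_subset_Ypts by blast

lemma rotX_Xpts: "P \<in> Xpts \<Longrightarrow> rotX P \<in> Xpts"
  using Xpts_proj rotX_proj rot_rep_Ypts proj_in_Xpts by metis

lemma rotX_rotX_rotX: assumes "P \<in> Xpts" shows "rotX (rotX (rotX P)) = P"
proof -
  obtain y where y: "y \<in> Ypts" "P = proj y" using Xpts_proj assms by blast
  obtain j where j: "y \<in> hex_cl j" using Ypts_cover y by blast
  have "rotX P = proj (rot j y)" using rotX_proj_hex_cl j y by simp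
  moreover have "rotX (proj (rot j y)) = proj (rot j (rot j y))" using rotX_proj_hex_cl rot_hex_cl j by blast
  moreover have "rotX (proj (rot j (rot j y))) = proj (rot j (rot j (rot j y)))" using rotX_proj_hex_cl rot_hex_cl j by blast
  ultimately show ?thesis using rot_rot_rot y by simp
qed

lemma continuous_on_rot: "continuous_on S (rot j)"
proof -
  have "rot j = (\<lambda>z. Rmat *v z + vec2 (rot_offset j) 0)" using rot_eq_Rmat by (simp add: fun_eq_iff)
  then show ?thesis by (simp add: continuous_intros)
qed

lemma rot_ball: "2 * r \<le> r' \<Longrightarrow> z \<in> ball p r \<Longrightarrow> rot j z \<in> ball (rot j p) r'"
  using dist_rot_le[of j p z] by (simp add: mem_ball)

context
  fixes p r \<tau> h r' \<tau>' h' j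
  assumes ok: "chart_data p r \<tau> h" and ok': "chart_data (rot j p) r' \<tau>' h'" and rr: "2 * r \<le> r'"
    and comm: "\<And>z. z \<in> ball p r \<Longrightarrow> rotX (proj (side_lift \<tau> h z)) = proj (side_lift \<tau>' h' (rot j z))"
begin

lemma rotX_in_charts:
  assumes "Q \<in> chart_dom p r \<tau> h"
  shows "rotX Q \<in> chart_dom (rot j p) r' \<tau>' h'"
    "chart_fun (rot j p) r' \<tau>' h' (rotX Q) = Rmat *v chart_fun p r \<tau> h Q + vec2 (rot_offset j) 0"
proof -
  obtain z where z: "z \<in> ball p r" "Q = proj (side_lift \<tau> h z)"
    using assms unfolding chart_dom_def by blast
  show "rotX Q \<in> chart_dom (rot j p) r' \<tau>' h'"
    using comm[OF z(1)] rot_ball[OF rr z(1)] z(2) unfolding chart_dom_def by auto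
  have "chart_fun p r \<tau> h Q = z" using chart_fun_proj_side_lift[OF ok z(1)] z(2) by simp
  moreover have "chart_fun (rot j p) r' \<tau>' h' (rotX Q) = rot j z"
    using comm[OF z(1)] chart_fun_proj_side_lift[OF ok' rot_ball[OF rr z(1)]] z(2) by simp
  ultimately show "chart_fun (rot j p) r' \<tau>' h' (rotX Q) = Rmat *v chart_fun p r \<tau> h Q + vec2 (rot_offset j) 0"
    by (simp add: rot_eq_Rmat)
qed

lemma continuous_map_rotX_on_chart:
  "continuous_map (subtopology Xtop (chart_dom p r \<tau> h)) Xtop rotX"
proof (rule continuous_map_eq)
  have "continuous_map (subtopology Xtop (chart_dom p r \<tau> h)) (top_of_set (ball p r)) (chart_fun p r \<tau> h)"
    by (rule continuous_map_chart_fun[OF ok])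
  moreover have "continuous_map (top_of_set (ball p r)) (top_of_set (ball (rot j p) r')) (rot j)"
    using rot_ball[OF rr] continuous_on_rot by (auto simp: continuous_map_in_subtopology)
  moreover have "continuous_map (top_of_set (ball (rot j p) r')) Xtop (\<lambda>z. proj (side_lift \<tau>' h' z))"
    using continuous_map_chart_inverse[OF ok'] continuous_map_into_fulltopology by blast
  ultimately show "continuous_map (subtopology Xtop (chart_dom p r \<tau> h)) Xtop
      ((\<lambda>z. proj (side_lift \<tau>' h' z)) \<circ> rot j \<circ> chart_fun p r \<tau> h)"
    by (intro continuous_map_compose)
next
  fix Q assume "Q \<in> topspace (subtopology Xtop (chart_dom p r \<tau> h))"
  then obtain z where z: "z \<in> ball p r" "Q = proj (side_lift \<tau> h z)"
    unfolding chart_dom_def by (auto simp: topspace_subtopology)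
  show "((\<lambda>z. proj (side_lift \<tau>' h' z)) \<circ> rot j \<circ> chart_fun p r \<tau> h) Q = rotX Q"
    using chart_fun_proj_side_lift[OF ok z(1)] comm[OF z(1)] z(2) by simp
qed

end

definition rotX_affine_at :: "(real^2) set \<Rightarrow> bool" where
  "rotX_affine_at P \<longleftrightarrow> (\<exists>W \<phi> W' \<psi> c. translation_chart lam W \<phi> \<and> translation_chart lam W' \<psi>
     \<and> openin Xtop W \<and> P \<in> W \<and> rotX ` W \<subseteq> W' \<and> (\<forall>Q\<in>W. \<psi> (rotX Q) = Rmat *v \<phi> Q + c)
     \<and> continuous_map (subtopology Xtop W) Xtop rotX)"

lemma rotX_affine_atI:
  assumes ok: "chart_data y r \<tau> h" and ok': "chart_data (rot j y) r' \<tau>' h'" and rr: "2 * r \<le> r'"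
    and comm: "\<And>z. z \<in> ball y r \<Longrightarrow> rotX (proj (side_lift \<tau> h z)) = proj (side_lift \<tau>' h' (rot j z))"
    and centre: "side_lift \<tau> h y = y"
  shows "rotX_affine_at (proj y)"
  unfolding rotX_affine_at_def
proof (rule exI[of _ "chart_dom y r \<tau> h"], rule exI[of _ "chart_fun y r \<tau> h"],
    rule exI[of _ "chart_dom (rot j y) r' \<tau>' h'"], rule exI[of _ "chart_fun (rot j y) r' \<tau>' h'"],
    rule exI[of _ "vec2 (rot_offset j) 0"], intro conjI ballI subsetI)
  have "0 < r" using ok by (simp add: chart_data_def)
  then show "proj y \<in> chart_dom y r \<tau> h"
    using centre unfolding chart_dom_def by (metis centre_in_ball image_eqI)
qed (use translation_chart_chart[OF ok] translation_chart_chart[OF ok'] openin_chart_dom[OF ok]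
    rotX_in_charts[OF ok ok' rr comm] continuous_map_rotX_on_chart[OF ok ok' rr comm] in auto)

lemma rotX_affine_at_hex:
  assumes y: "y \<in> hex j"
  shows "rotX_affine_at (proj y)"
proof -
  obtain r0 where r0: "r0 > 0" "chart_data y r0 0 (\<lambda>_. 1)" "ball y r0 \<subseteq> hex j"
    using hex_chart[OF y] by blast
  obtain r0' where r0': "r0' > 0" "chart_data (rot j y) r0' 0 (\<lambda>_. 1)"
    using hex_chart[OF rot_hex[OF y]] by blast
  let ?r = "min r0 (r0' / 2)"
  have ok: "chart_data y ?r 0 (\<lambda>_. 1)" using chart_data_shrink[OF r0(2)] r0(1) r0'(1) by simp
  show ?thesis
  proof (rule rotX_affine_atI[OF ok r0'(2)])
    show "rotX (proj (side_lift 0 (\<lambda>_. 1) z)) = proj (side_lift 0 (\<lambda>_. 1) (rot j z))" if "z \<in> ball y ?r" for z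
      using rotX_proj_hex_cl[of z j] that r0(3) by (auto simp: hex_cl_def side_lift_def)
  qed (simp_all add: side_lift_def)
qed

lemma rotX_affine_at_hex_side:
  assumes y: "y \<in> hex_side e j"
  shows "rotX_affine_at (proj y)"
proof -
  let ?\<tau> = "side_shift e j" and ?h = "side_fun e j"
  obtain r0 where r0: "r0 > 0" "chart_data y r0 ?\<tau> ?h"
    "\<And>z. z \<in> ball y r0 \<Longrightarrow> 0 \<le> ?h z \<Longrightarrow> z \<in> hex_cl j"
    "\<And>z. z \<in> ball y r0 \<Longrightarrow> ?h z < 0 \<Longrightarrow> z + ?\<tau> \<in> hex (side_nbr e j)"
    using hex_side_chart[OF y] by blast
  obtain r0' where r0': "r0' > 0" "chart_data (rot j y) r0' (side_shift (next_side e) j) (side_fun (next_side e) j)"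
    using hex_side_chart[OF rot_hex_side[OF y]] by blast
  let ?r = "min r0 (r0' / 2)"
  have comm: "rotX (proj (side_lift ?\<tau> ?h z))
      = proj (side_lift (side_shift (next_side e) j) (side_fun (next_side e) j) (rot j z))"
    if z: "z \<in> ball y ?r" for z
  proof (cases "0 \<le> ?h z")
    case True
    then show ?thesis using r0(3) z rotX_proj_hex_cl by (simp add: side_lift_def side_fun_next_rot)
  next
    case False
    then have "rotX (proj (z + ?\<tau>)) = proj (rot (side_nbr e j) (z + ?\<tau>))"
      using r0(4) z rotX_proj_hex_cl by (auto simp: hex_cl_def)
    then show ?thesis
      using False rot_side_shift[OF hex_side_valid[OF y]] by (simp add: side_lift_def side_fun_next_rot)
  qed
  have ok: "chart_data y ?r ?\<tau> ?h" using chart_data_shrink[OF r0(2)] r0(1) r0'(1) by simp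
  have "side_lift ?\<tau> ?h y = y" using y by (simp add: side_lift_def hex_side_def)
  then show ?thesis using rotX_affine_atI[OF ok r0'(2) _ comm] by simp
qed

lemma rotX_affine_at_Xpts: "P \<in> Xpts \<Longrightarrow> rotX_affine_at P"
  using Xpts_proj Ypts_cover rotX_affine_at_hex rotX_affine_at_hex_side
  unfolding hex_cl_def by blast

lemma continuous_map_rotX: "continuous_map Xtop Xtop rotX"
proof (rule pasting_lemma[where I = "{W. openin Xtop W \<and> continuous_map (subtopology Xtop W) Xtop rotX}"
      and T = id and f = "\<lambda>_. rotX"])
  fix P assume "P \<in> topspace Xtop"
  then have "rotX_affine_at P" using rotX_affine_at_Xpts by (simp add: topspace_Xtop)
  then show "\<exists>W. W \<in> {W. openin Xtop W \<and> continuous_map (subtopology Xtop W) Xtop rotX} \<and> P \<in> id W \<and> rotX P = rotX P"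
    unfolding rotX_affine_at_def by auto
qed auto

lemma homeomorphic_map_rotX: "homeomorphic_map Xtop Xtop rotX"
  unfolding homeomorphic_map_maps homeomorphic_maps_def
  using continuous_map_rotX continuous_map_compose[OF continuous_map_rotX continuous_map_rotX]
    rotX_rotX_rotX rotX_Xpts by (intro exI[of _ "rotX \<circ> rotX"]) (simp add: topspace_Xtop)

lemma ladder_affine_homeo_rotX: "ladder_affine_homeo lam Rmat rotX"
  unfolding ladder_affine_homeo_def
  using homeomorphic_map_rotX rotX_affine_at_Xpts unfolding rotX_affine_at_def by blast

end

lemma Rmat_entries: "Rmat $ 1 $ 1 = -1" "Rmat $ 1 $ 2 = -1" "Rmat $ 2 $ 1 = 1" "Rmat $ 2 $ 2 = 0"
  by (simp_all add: Rmat_def)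

lemma Rmat_det: "det Rmat = 1"
  by (simp add: det_2 Rmat_entries)

lemma Rmat_sq: "Rmat ** Rmat = vector [vector [0, 1], vector [-1, -1]]"
  by (simp add: vec_eq_iff forall_2 matrix_matrix_mult_def sum_2 Rmat_entries)

lemma Rmat_cube: "Rmat ** Rmat ** Rmat = mat 1"
proof -
  have "Rmat ** Rmat ** Rmat = Rmat ** (Rmat ** Rmat)" by (simp add: matrix_mul_assoc)
  then show ?thesis
    by (simp add: Rmat_sq vec_eq_iff forall_2 matrix_matrix_mult_def sum_2 Rmat_entries mat_def)
qed

lemma Rmat_neq_scalar: "Rmat \<noteq> mat 1" "Rmat \<noteq> - mat 1"
  by (auto simp: vec_eq_iff forall_2 Rmat_entries mat_def)

lemma Rmat_sq_neq_scalar: "Rmat ** Rmat \<noteq> mat 1" "Rmat ** Rmat \<noteq> - mat 1"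
  by (auto simp: Rmat_sq vec_eq_iff forall_2 mat_def)

theorem mainTheorem7:
  fixes lam :: real
  assumes "0 < lam" and "lam < 1"
  shows "(\<exists>f. orientation_preserving_affine lam Rmat f)
    \<and> \<bar>Rmat $ 1 $ 1 + Rmat $ 2 $ 2\<bar> < 2
    \<and> Rmat ** Rmat ** Rmat = mat 1
    \<and> Rmat \<noteq> mat 1 \<and> Rmat \<noteq> - mat 1
    \<and> Rmat ** Rmat \<noteq> mat 1 \<and> Rmat ** Rmat \<noteq> - mat 1"
proof -
  interpret ladder_param lam using assms by unfold_locales
  have "orientation_preserving_affine lam Rmat rotX"
    unfolding orientation_preserving_affine_def using ladder_affine_homeo_rotX Rmat_det by simp
  then show ?thesis using Rmat_cube Rmat_neq_scalar Rmat_sq_neq_scalar by (auto simp: Rmat_entries)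
qed

end
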